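(* Let $V=\mathbb{C}^{2n}$ with basis $v_1,\dots,v_{2n}$ and symplectic form with Gram matrix $J'=\begin{pmatrix}0&J\\-J&0\end{pmatrix}$, $J$ the $n\times n$ anti-diagonal matrix of ones, and let $\mathrm{Sp}_{2n}\times\mathbb{G}_m$ act on $\mathfrak{sp}_{2n}\oplus S^3V$, with $\mathrm{Sp}_{2n}$ acting naturally and $\mathbb{G}_m$ acting by scalar weight $2$ on $\mathfrak{sp}_{2n}$ and weight $3$ on $S^3V$. Let $\mathfrak{h}_2$ be the $2$-dimensional reflection representation of $\mathfrak{S}_3$. Then the quotient $(\mathfrak{h}_2\oplus\mathfrak{h}_2^* )^{\oplus n}/\mathfrak{S}_3$ is isomorphic to: (i) the closure of the $\mathrm{Sp}_{2n}\times\mathbb{G}_m$-orbit of $(e_{11}-e_{2n,2n},\ v_1\otimes v_1\otimes v_1+v_{2n}\otimes v_{2n}\otimes v_{2n})\in\mathfrak{sp}_{2n}\oplus S^3V$; (ii) the closure of the $\mathrm{Sp}_{2n}\times\mathbb{G}_m$-orbit of $(e_{11}-e_{2n,2n},\ a\,v_1\otimes v_1\otimes v_1+b\,v_{2n}\otimes v_{2n}\otimes v_{2n})$, for any $a,b\in\mathbb{C}^\times$.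
   Context: $e_{ij}$ denotes the matrix unit; $S^3V$ is the symmetric cube. $\mathfrak{S}_3$ acts diagonally on $(\mathfrak{h}_2\oplus\mathfrak{h}_2^* )^{\oplus n}$. *)

theory Defs
  imports Complex_Main "HOL-Combinatorics.Permutations"
begin

text \<open>Points of an affine space are functions from an index type to the complex
numbers; a polynomial function is built from constants and coordinate
projections by sums and products (so it involves finitely many coordinates).\<close>

inductive poly_fun :: "(('i \<Rightarrow> complex) \<Rightarrow> complex) \<Rightarrow> bool" where
  pf_const: "poly_fun (\<lambda>x. c)"
| pf_var: "poly_fun (\<lambda>x. x i)"
| pf_add: "poly_fun p \<Longrightarrow> poly_fun q \<Longrightarrow> poly_fun (\<lambda>x. p x + q x)"
| pf_mult: "poly_fun p \<Longrightarrow> poly_fun q \<Longrightarrow> poly_fun (\<lambda>x. p x * q x)"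

definition zariski_closure :: "('i \<Rightarrow> complex) set \<Rightarrow> ('i \<Rightarrow> complex) set" where
  "zariski_closure S =
     {x. \<forall>p. poly_fun p \<and> (\<forall>y\<in>S. p y = 0) \<longrightarrow> p x = 0}"

text \<open>@quotient_iso X act G Y@: the categorical quotient X/G (X a closed
subvariety with a G-action) is isomorphic to the closed subvariety Y, i.e.
there is a G-invariant morphism \<pi> : X \<rightarrow> Y whose pullback
\<pi>^* : C[Y] \<rightarrow> C[X]^G is an isomorphism (injective and surjective).\<close>

definition quotient_iso ::
  "('i \<Rightarrow> complex) set \<Rightarrow> ('g \<Rightarrow> ('i \<Rightarrow> complex) \<Rightarrow> ('i \<Rightarrow> complex)) \<Rightarrow> 'g set
     \<Rightarrow> ('j \<Rightarrow> complex) set \<Rightarrow> bool" where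
  "quotient_iso X act G Y \<longleftrightarrow>
     (\<exists>\<pi>. (\<forall>j. poly_fun (\<lambda>x. \<pi> x j)) \<and> \<pi> ` X \<subseteq> Y
        \<and> (\<forall>g\<in>G. \<forall>x\<in>X. \<pi> (act g x) = \<pi> x)
        \<and> (\<forall>p. poly_fun p \<and> (\<forall>x\<in>X. p (\<pi> x) = 0) \<longrightarrow> (\<forall>y\<in>Y. p y = 0))
        \<and> (\<forall>q. poly_fun q \<and> (\<forall>g\<in>G. \<forall>x\<in>X. q (act g x) = q x)
               \<longrightarrow> (\<exists>p. poly_fun p \<and> (\<forall>x\<in>X. q x = p (\<pi> x)))))"

text \<open>Coordinates (k, b, c): copy k < n, b = False for h_2 and b = True for
h_2^*, c < 3.  h_2 = {sum-zero vectors in C^3} with S_3 permuting coordinates;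
h_2^* is realised as the sum-zero vectors of the dual (C^3)^*, on which a
permutation matrix P acts by (P^{-1})^T = P.\<close>

definition refl_space :: "nat \<Rightarrow> (nat \<times> bool \<times> nat \<Rightarrow> complex) set" where
  "refl_space n =
     {x. (\<forall>k b c. (n \<le> k \<or> 3 \<le> c) \<longrightarrow> x (k, b, c) = 0)
       \<and> (\<forall>k<n. \<forall>b. x (k, b, 0) + x (k, b, 1) + x (k, b, 2) = 0)}"

definition S3 :: "(nat \<Rightarrow> nat) set" where
  "S3 = {\<sigma>. \<sigma> permutes {0, 1, 2}}"

definition S3_act :: "(nat \<Rightarrow> nat) \<Rightarrow> (nat \<times> bool \<times> nat \<Rightarrow> complex) \<Rightarrow> (nat \<times> bool \<times> nat \<Rightarrow> complex)" where
  "S3_act \<sigma> x = (\<lambda>(k, b, c). x (k, b, inv \<sigma> c))"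

text \<open>Basis v_1..v_{2n} is indexed 0..2n-1.  Points of gl_{2n} \<oplus> V^{\<otimes>3}
are functions on (nat \<times> nat) + (nat \<times> nat \<times> nat), zero outside range;
sp_{2n} and S^3 V are closed linear subspaces containing the orbits.\<close>

definition Jp :: "nat \<Rightarrow> nat \<Rightarrow> nat \<Rightarrow> complex" where
  "Jp n i j = (if i < 2*n \<and> j < 2*n \<and> i + j = 2*n - 1 then (if i < n then 1 else -1) else 0)"

definition sp_group :: "nat \<Rightarrow> (nat \<Rightarrow> nat \<Rightarrow> complex) set" where
  "sp_group n = {g. \<forall>i<2*n. \<forall>j<2*n.
      (\<Sum>a<2*n. \<Sum>b<2*n. g a i * Jp n a b * g b j) = Jp n i j}"

definition pt :: "(nat \<times> nat \<Rightarrow> complex) \<Rightarrow> (nat \<times> nat \<times> nat \<Rightarrow> complex)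
                    \<Rightarrow> ((nat \<times> nat) + (nat \<times> nat \<times> nat) \<Rightarrow> complex)" where
  "pt M T = case_sum M T"

text \<open>Orbit of (M, T) under Sp_{2n} \<times> G_m: g acts by conjugation on the first
summand and by g \<otimes> g \<otimes> g on the second; t acts by t^2 and t^3.\<close>

definition sp_orbit :: "nat \<Rightarrow> (nat \<times> nat \<Rightarrow> complex) \<Rightarrow> (nat \<times> nat \<times> nat \<Rightarrow> complex)
     \<Rightarrow> ((nat \<times> nat) + (nat \<times> nat \<times> nat) \<Rightarrow> complex) set" where
  "sp_orbit n M T =
     {pt (\<lambda>(i, j). if i < 2*n \<and> j < 2*n then
                     t^2 * (\<Sum>a<2*n. \<Sum>b<2*n. g i a * M (a, b) * h b j) else 0)
         (\<lambda>(i, j, k). if i < 2*n \<and> j < 2*n \<and> k < 2*n then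
                     t^3 * (\<Sum>a<2*n. \<Sum>b<2*n. \<Sum>c<2*n. g i a * g j b * g k c * T (a, b, c))
                   else 0)
      | g h t. g \<in> sp_group n
          \<and> (\<forall>i<2*n. \<forall>j<2*n. (\<Sum>a<2*n. g i a * h a j) = (if i = j then 1 else 0))
          \<and> t \<noteq> 0}"

definition M0 :: "nat \<Rightarrow> nat \<times> nat \<Rightarrow> complex" where
  "M0 n = (\<lambda>(i, j). if i = 0 \<and> j = 0 then 1
                     else if i = 2*n - 1 \<and> j = 2*n - 1 then -1 else 0)"

definition T0 :: "nat \<Rightarrow> complex \<Rightarrow> complex \<Rightarrow> nat \<times> nat \<times> nat \<Rightarrow> complex" where
  "T0 n a b = (\<lambda>(i, j, k). if i = 0 \<and> j = 0 \<and> k = 0 then a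
                     else if i = 2*n - 1 \<and> j = 2*n - 1 \<and> k = 2*n - 1 then b else 0)"

end

theory Submission
  imports Defs
begin

text \<open>
  In coordinates along the eigenvectors of the 3-cycle, a point of \<open>(h_2 \<oplus> h_2\<^sup>*)\<^sup>n\<close> is a pair
  \<open>(u, w)\<close> of vectors of \<open>V = \<complex>\<^sup>2\<^sup>n\<close>; the 3-cycle acts as \<open>(u, w) \<mapsto> (\<omega> u, \<omega>\<^sup>2 w)\<close> and a
  transposition swaps \<open>u\<close> and \<open>w\<close>. The quotient map is \<open>(u, w) \<mapsto> (-(u w\<^sup>T + w u\<^sup>T) J', c (u\<^sup>3 + w\<^sup>3))\<close>.

  Its image is the orbit closure. If \<open>\<langle>u, w\<rangle> = t\<^sup>2 \<noteq> 0\<close>, transvections carry \<open>v\<^sub>1, v\<^sub>2\<^sub>n\<close> to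
  \<open>u / (\<alpha> t), w / (\<beta> t)\<close>, and for \<open>\<alpha> \<beta> = 1\<close>, \<open>c \<alpha>\<^sup>3 = a\<close>, \<open>c \<beta>\<^sup>3 = b\<close> the resulting orbit point is
  the image of \<open>(u, w)\<close>; the points with \<open>\<langle>u, w\<rangle> = 0\<close> are limits of these. As the orbit lies in
  the image, a polynomial vanishing on the image vanishes on the closure.

  Every invariant polynomial factors through the map: invariance under the 3-cycle leaves the ring
  generated by \<open>u\<^sub>r w\<^sub>s\<close>, \<open>u\<^sub>r u\<^sub>s u\<^sub>t\<close>, \<open>w\<^sub>r w\<^sub>s w\<^sub>t\<close>, and invariance under the swap its
  swap-symmetric part, which is generated by the coordinates \<open>u\<^sub>r w\<^sub>s + w\<^sub>r u\<^sub>s\<close> and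
  \<open>u\<^sub>r u\<^sub>s u\<^sub>t + w\<^sub>r w\<^sub>s w\<^sub>t\<close> of the map, because a product of two swap-antisymmetric generators is a
  polynomial in them.
\<close>

lemma poly_fun_If: "poly_fun p \<Longrightarrow> poly_fun q \<Longrightarrow> poly_fun (\<lambda>x. if P then p x else q x)"
  by (cases P) auto

lemma poly_fun_sum:
  "finite A \<Longrightarrow> (\<And>a. a \<in> A \<Longrightarrow> poly_fun (p a)) \<Longrightarrow> poly_fun (\<lambda>x. \<Sum>a\<in>A. p a x)"
  by (induction A rule: finite_induct) (auto intro: pf_const pf_add)

lemma isCont_poly_fun:
  assumes "poly_fun p" and "\<And>i. isCont (\<lambda>e. Y e i) e0"
  shows "isCont (\<lambda>e. p (Y e)) e0"
  using assms(1) by induction (auto intro: assms(2) continuous_intros)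

lemma isCont_If_const: "isCont f x \<Longrightarrow> isCont g x \<Longrightarrow> isCont (\<lambda>e. if P then f e else g e) x"
  by (cases P) auto

lemma poly_fun_vanishes_at_limit:
  fixes Y :: "complex \<Rightarrow> 'i \<Rightarrow> complex"
  assumes p: "poly_fun p" and Y: "\<And>i. isCont (\<lambda>e. Y e i) 0"
    and vanish: "\<And>e. e \<noteq> 0 \<Longrightarrow> e \<noteq> z \<Longrightarrow> p (Y e) = 0"
  shows "p (Y 0) = 0"
proof -
  have "((\<lambda>e. p (Y e)) \<longlongrightarrow> p (Y 0)) (at 0)"
    using isCont_poly_fun[OF p Y] by (simp add: isCont_def)
  moreover have "\<forall>\<^sub>F e in at 0. e \<noteq> 0 \<and> e \<noteq> z"
    by (intro eventually_conj eventually_neq_at_within)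
  then have "((\<lambda>e. p (Y e)) \<longlongrightarrow> 0) (at 0)"
    by (rule tendsto_eventually[OF eventually_mono]) (simp add: vanish)
  ultimately show ?thesis by (rule LIM_unique)
qed

definition \<omega> :: complex where
  "\<omega> = Complex (-1/2) (sqrt 3 / 2)"

lemma omega_sum: "1 + \<omega> + \<omega>^2 = 0"
  by (simp add: \<omega>_def complex_eq_iff power2_eq_square)

lemma omega_cube: "\<omega>^3 = 1"
proof -
  have "\<omega>^3 - 1 = (\<omega> - 1) * (1 + \<omega> + \<omega>^2)"
    by (simp add: algebra_simps power3_eq_cube power2_eq_square)
  then show ?thesis using omega_sum by simp
qed

section \<open>The symplectic group\<close>

definition symp :: "nat \<Rightarrow> (nat \<Rightarrow> complex) \<Rightarrow> (nat \<Rightarrow> complex) \<Rightarrow> complex" where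
  "symp n x y = (\<Sum>i<2*n. \<Sum>j<2*n. x i * Jp n i j * y j)"

definition vecs :: "nat \<Rightarrow> (nat \<Rightarrow> complex) set" where
  "vecs n = {v. \<forall>i. 2*n \<le> i \<longrightarrow> v i = 0}"

definition unit_vec :: "nat \<Rightarrow> nat \<Rightarrow> complex" where
  "unit_vec k = (\<lambda>i. if i = k then 1 else 0)"

lemma unit_vec_vecs: "k < 2*n \<Longrightarrow> unit_vec k \<in> vecs n"
  by (auto simp: unit_vec_def vecs_def)

lemma vecs_add: "x \<in> vecs n \<Longrightarrow> y \<in> vecs n \<Longrightarrow> (\<lambda>i. x i + y i) \<in> vecs n"
  and vecs_diff: "x \<in> vecs n \<Longrightarrow> y \<in> vecs n \<Longrightarrow> (\<lambda>i. x i - y i) \<in> vecs n"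
  and vecs_scale: "x \<in> vecs n \<Longrightarrow> (\<lambda>i. c * x i) \<in> vecs n"
  by (auto simp: vecs_def)

lemma vecs_nonzero: "u \<in> vecs n \<Longrightarrow> u \<noteq> (\<lambda>_. 0) \<Longrightarrow> \<exists>k<2*n. u k \<noteq> 0"
  by (auto simp: vecs_def) (meson not_less)

lemma vecs_sum_unit_vec: "v \<in> vecs n \<Longrightarrow> (\<Sum>b<2*n. v b * unit_vec b i) = v i"
  by (cases "i < 2*n") (auto simp: unit_vec_def vecs_def if_distrib cong: if_cong)

lemma sum_unit_vec_left:
  assumes "k < 2*n"
  shows "(\<Sum>i<2*n. unit_vec k i * f i) = f k"
proof -
  have "(\<Sum>i<2*n. unit_vec k i * f i) = (\<Sum>i<2*n. if i = k then f i else 0)"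
    by (rule sum.cong) (auto simp: unit_vec_def)
  then show ?thesis using assms by (simp add: sum.delta')
qed

lemma sum_unit_vec_right: "k < 2*n \<Longrightarrow> (\<Sum>i<2*n. f i * unit_vec k i) = f k"
  using sum_unit_vec_left[of k n f] by (simp add: mult.commute)

lemma Jp_antisym: "Jp n j i = - Jp n i j"
  by (auto simp: Jp_def)

lemma Jp_0_last: "1 \<le> n \<Longrightarrow> Jp n 0 (2*n-1) = 1"
  and Jp_last_0: "1 \<le> n \<Longrightarrow> Jp n (2*n-1) 0 = -1"
  by (simp_all add: Jp_def)

lemma sum_Jp_right:
  assumes "i < 2*n"
  shows "(\<Sum>j<2*n. Jp n i j * y j) = Jp n i (2*n-1-i) * y (2*n-1-i)"
proof -
  have "(\<Sum>j<2*n. Jp n i j * y j) = (\<Sum>j<2*n. if j = 2*n-1-i then Jp n i j * y j else 0)"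
    using assms by (intro sum.cong) (auto simp: Jp_def)
  then show ?thesis using assms by (simp add: sum.delta')
qed

lemma sum_Jp_left:
  assumes "j < 2*n"
  shows "(\<Sum>i<2*n. x i * Jp n i j) = x (2*n-1-j) * Jp n (2*n-1-j) j"
proof -
  have "(\<Sum>i<2*n. x i * Jp n i j) = (\<Sum>i<2*n. if i = 2*n-1-j then x i * Jp n i j else 0)"
    using assms by (intro sum.cong) (auto simp: Jp_def)
  then show ?thesis using assms by (simp add: sum.delta')
qed

lemma symp_unit_vec_left: "i < 2*n \<Longrightarrow> symp n (unit_vec i) y = Jp n i (2*n-1-i) * y (2*n-1-i)"
  by (simp add: symp_def mult.assoc sum_unit_vec_left sum_Jp_right flip: sum_distrib_left)

lemma symp_by_columns: "symp n x y = (\<Sum>j<2*n. (\<Sum>i<2*n. x i * Jp n i j) * y j)"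
  unfolding symp_def by (subst sum.swap) (simp add: sum_distrib_right)

lemma symp_unit_vec_right: "j < 2*n \<Longrightarrow> symp n x (unit_vec j) = x (2*n-1-j) * Jp n (2*n-1-j) j"
  unfolding symp_by_columns by (simp add: sum_unit_vec_right sum_Jp_left)

lemma symp_unit_vec_unit_vec: "i < 2*n \<Longrightarrow> j < 2*n \<Longrightarrow> symp n (unit_vec i) (unit_vec j) = Jp n i j"
  using symp_unit_vec_left[of i n "unit_vec j"] by (auto simp: unit_vec_def Jp_def)

lemma symp_first: "1 \<le> n \<Longrightarrow> symp n (unit_vec 0) y = y (2*n-1)"
  using symp_unit_vec_left[of 0 n y] Jp_0_last[of n] by simp

lemma symp_last: "1 \<le> n \<Longrightarrow> symp n (unit_vec (2*n-1)) y = - y 0"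
  using symp_unit_vec_left[of "2*n-1" n y] Jp_last_0[of n] by simp

lemma symp_antisym: "symp n x y = - symp n y x"
proof -
  have "x i * Jp n i j * y j = - (y j * Jp n j i * x i)" for i j
    by (subst Jp_antisym) simp
  then have "symp n x y = - (\<Sum>i<2*n. \<Sum>j<2*n. y j * Jp n j i * x i)"
    by (simp add: symp_def sum_negf)
  also have "(\<Sum>i<2*n. \<Sum>j<2*n. y j * Jp n j i * x i) = symp n y x"
    unfolding symp_def by (rule sum.swap)
  finally show ?thesis .
qed

lemma symp_self: "symp n x x = 0"
  using symp_antisym[of n x x] by simp

lemma symp_lin_right: "symp n x (\<lambda>i. y i + c * z i) = symp n x y + c * symp n x z"
  and symp_lin_left: "symp n (\<lambda>i. y i + c * z i) x = symp n y x + c * symp n z x"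
  by (simp_all add: symp_def algebra_simps sum.distrib sum_distrib_left)

lemma symp_add_right: "symp n x (\<lambda>i. y i + z i) = symp n x y + symp n x z"
  and symp_add_left: "symp n (\<lambda>i. y i + z i) x = symp n y x + symp n z x"
  using symp_lin_right[of n x y 1 z] symp_lin_left[of n y 1 z x] by simp_all

lemma symp_scale_right: "symp n x (\<lambda>i. c * z i) = c * symp n x z"
  and symp_scale_left: "symp n (\<lambda>i. c * z i) x = c * symp n z x"
  and symp_diff_left: "symp n (\<lambda>i. y i - z i) x = symp n y x - symp n z x"
  and symp_zero_right: "symp n x (\<lambda>_. 0) = 0"
  by (simp_all add: symp_def algebra_simps sum_distrib_left sum_subtractf)

lemma symp_expand_right: "symp n x v = (\<Sum>j<2*n. v j * symp n x (unit_vec j))"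
  unfolding symp_by_columns[of n x v]
  by (intro sum.cong refl) (simp add: sum_Jp_left symp_unit_vec_right)

definition symplectic_map :: "nat \<Rightarrow> ((nat \<Rightarrow> complex) \<Rightarrow> (nat \<Rightarrow> complex)) \<Rightarrow> bool" where
  "symplectic_map n f \<longleftrightarrow> (\<forall>v\<in>vecs n. f v \<in> vecs n)
     \<and> (\<forall>v\<in>vecs n. \<forall>i. f v i = (\<Sum>j<2*n. v j * f (unit_vec j) i))
     \<and> (\<forall>x\<in>vecs n. \<forall>y\<in>vecs n. symp n (f x) (f y) = symp n x y)
     \<and> (\<forall>v\<in>vecs n. \<exists>x\<in>vecs n. f x = v)"

lemma symplectic_map_comp:
  assumes f: "symplectic_map n f" and g: "symplectic_map n g"
  shows "symplectic_map n (f \<circ> g)"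
proof -
  have fV: "\<And>v. v \<in> vecs n \<Longrightarrow> f v \<in> vecs n" and gV: "\<And>v. v \<in> vecs n \<Longrightarrow> g v \<in> vecs n"
    and f_lin: "\<And>v i. v \<in> vecs n \<Longrightarrow> f v i = (\<Sum>j<2*n. v j * f (unit_vec j) i)"
    and g_lin: "\<And>v i. v \<in> vecs n \<Longrightarrow> g v i = (\<Sum>j<2*n. v j * g (unit_vec j) i)"
    and f_symp: "\<And>x y. x \<in> vecs n \<Longrightarrow> y \<in> vecs n \<Longrightarrow> symp n (f x) (f y) = symp n x y"
    and g_symp: "\<And>x y. x \<in> vecs n \<Longrightarrow> y \<in> vecs n \<Longrightarrow> symp n (g x) (g y) = symp n x y"
    and f_surj: "\<And>v. v \<in> vecs n \<Longrightarrow> \<exists>x\<in>vecs n. f x = v"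
    and g_surj: "\<And>v. v \<in> vecs n \<Longrightarrow> \<exists>x\<in>vecs n. g x = v"
    using f g unfolding symplectic_map_def by auto
  have "f (g v) i = (\<Sum>j<2*n. v j * f (g (unit_vec j)) i)" if v: "v \<in> vecs n" for v i
  proof -
    have "f (g v) i = (\<Sum>a<2*n. (\<Sum>j<2*n. v j * g (unit_vec j) a) * f (unit_vec a) i)"
      using f_lin[OF gV[OF v]] g_lin[OF v] by simp
    also have "\<dots> = (\<Sum>j<2*n. v j * (\<Sum>a<2*n. g (unit_vec j) a * f (unit_vec a) i))"
      by (simp add: sum_distrib_left sum_distrib_right mult.assoc) (rule sum.swap)
    also have "\<dots> = (\<Sum>j<2*n. v j * f (g (unit_vec j)) i)"
      using f_lin gV unit_vec_vecs by (intro sum.cong) auto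
    finally show ?thesis .
  qed
  moreover have "\<exists>x\<in>vecs n. f (g x) = v" if "v \<in> vecs n" for v
    using f_surj[OF that] g_surj by metis
  ultimately show ?thesis
    unfolding symplectic_map_def comp_apply using fV gV f_symp g_symp by simp
qed

definition transvection :: "nat \<Rightarrow> (nat \<Rightarrow> complex) \<Rightarrow> complex \<Rightarrow> (nat \<Rightarrow> complex) \<Rightarrow> nat \<Rightarrow> complex" where
  "transvection n a c v = (\<lambda>i. v i + c * symp n a v * a i)"

lemma transvection_inverse: "transvection n a c (transvection n a (-c) v) = v"
proof -
  have "symp n a (transvection n a (-c) v) = symp n a v"
    unfolding transvection_def using symp_lin_right[of n a v "-c * symp n a v" a]
    by (simp add: symp_self mult.assoc)
  then show ?thesis by (simp add: transvection_def algebra_simps)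
qed

lemma symp_transvection: "symp n (transvection n a c x) (transvection n a c y) = symp n x y"
proof -
  have tv: "transvection n a c v = (\<lambda>i. v i + (c * symp n a v) * a i)" for v
    by (simp add: transvection_def mult.assoc)
  show ?thesis
    unfolding tv symp_lin_left symp_lin_right symp_self
    using symp_antisym[of n x a] symp_antisym[of n y a] by (simp add: algebra_simps)
qed

lemma symplectic_map_transvection:
  assumes a: "a \<in> vecs n"
  shows "symplectic_map n (transvection n a c)"
proof -
  have vecs: "transvection n a c' v \<in> vecs n" if "v \<in> vecs n" for c' v
    using a that by (auto simp: vecs_def transvection_def)
  have "transvection n a c v i = (\<Sum>j<2*n. v j * transvection n a c (unit_vec j) i)"
    if v: "v \<in> vecs n" for v i
  proof -
    have "(\<Sum>j<2*n. v j * transvection n a c (unit_vec j) i)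
        = (\<Sum>j<2*n. v j * unit_vec j i) + c * a i * (\<Sum>j<2*n. v j * symp n a (unit_vec j))"
      by (simp add: transvection_def algebra_simps sum.distrib sum_distrib_left)
    also have "\<dots> = v i + c * a i * symp n a v"
      using v by (simp only: vecs_sum_unit_vec flip: symp_expand_right)
    finally show ?thesis by (simp add: transvection_def algebra_simps)
  qed
  moreover have "\<exists>x\<in>vecs n. transvection n a c x = v" if "v \<in> vecs n" for v
    using vecs[OF that] transvection_inverse by blast
  ultimately show ?thesis
    unfolding symplectic_map_def using vecs symp_transvection by blast
qed

lemma transvection_moves:
  assumes v: "v \<in> vecs n" and v': "v' \<in> vecs n" and nz: "symp n v v' \<noteq> 0"
  shows "\<exists>f. symplectic_map n f \<and> f v = v' \<and> (\<forall>z. symp n v' z = symp n v z \<longrightarrow> f z = z)"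
proof -
  define a where "a = (\<lambda>i. v' i - v i)"
  have "symp n a v = - symp n v v'"
    using symp_antisym[of n v' v] by (simp add: a_def symp_diff_left symp_self)
  then have "transvection n a (- 1 / symp n v v') v = v'"
    using nz by (auto simp: transvection_def a_def)
  moreover have "transvection n a c z = z" if "symp n v' z = symp n v z" for c z
    using that by (simp add: transvection_def a_def symp_diff_left)
  moreover have "a \<in> vecs n" using v v' by (simp add: a_def vecs_diff)
  ultimately show ?thesis using symplectic_map_transvection by blast
qed

lemma symplectic_map_moves_via:
  assumes v: "v \<in> vecs n" and v': "v' \<in> vecs n" and z: "z \<in> vecs n"
    and nz: "symp n v z \<noteq> 0" "symp n z v' \<noteq> 0"
    and fix_e: "symp n z e = symp n v e" "symp n v' e = symp n z e"
  shows "\<exists>f. symplectic_map n f \<and> f v = v' \<and> f e = e"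
proof -
  obtain f1 where f1: "symplectic_map n f1" "f1 v = z" "f1 e = e"
    using transvection_moves[OF v z nz(1)] fix_e(1) by blast
  obtain f2 where f2: "symplectic_map n f2" "f2 z = v'" "f2 e = e"
    using transvection_moves[OF z v' nz(2)] fix_e(2) by blast
  show ?thesis
    using symplectic_map_comp[OF f2(1) f1(1)] f1 f2 by auto
qed

lemma symplectic_map_from_first:
  assumes n: "1 \<le> n" and u: "u \<in> vecs n" and u0: "u \<noteq> (\<lambda>_. 0)"
  shows "\<exists>f. symplectic_map n f \<and> f (unit_vec 0) = u"
proof -
  let ?e0 = "unit_vec 0" and ?eL = "unit_vec (2*n-1)"
  have e0: "?e0 \<in> vecs n" and eL: "?eL \<in> vecs n" using n by (auto intro: unit_vec_vecs)
  have via: "\<exists>f. symplectic_map n f \<and> f ?e0 = u"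
    if "z \<in> vecs n" "symp n ?e0 z \<noteq> 0" "symp n z u \<noteq> 0" for z
    using symplectic_map_moves_via[OF e0 u that, of "\<lambda>_. 0"] by (auto simp: symp_zero_right)
  consider "u (2*n-1) \<noteq> 0" | "u (2*n-1) = 0" "u 0 \<noteq> 0" | "u (2*n-1) = 0" "u 0 = 0" by blast
  then show ?thesis
  proof cases
    case 1
    then have "symp n ?e0 u \<noteq> 0" using symp_first[OF n] by simp
    then show ?thesis using transvection_moves[OF e0 u] by blast
  next
    case 2
    have "symp n ?e0 ?eL = 1" using symp_first[OF n] by (simp add: unit_vec_def)
    then show ?thesis using via[OF eL] symp_last[OF n] 2 by simp
  next
    case 3
    obtain k where k: "k < 2*n" "u k \<noteq> 0" using vecs_nonzero[OF u u0] by blast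
    have "k \<noteq> 0" "k \<noteq> 2*n-1" using k 3 by (metis, metis)
    define z where "z = (\<lambda>i. ?eL i + unit_vec (2*n-1-k) i)"
    have "z \<in> vecs n" unfolding z_def using n k by (intro vecs_add unit_vec_vecs) auto
    moreover have "symp n ?e0 z = 1"
      using symp_first[OF n] \<open>k \<noteq> 0\<close> k by (simp add: z_def unit_vec_def)
    moreover have "symp n z u = Jp n (2*n-1-k) k * u k"
      using symp_last[OF n] symp_unit_vec_left[of "2*n-1-k" n u] k 3
      by (simp add: z_def symp_add_left)
    then have "symp n z u \<noteq> 0" using k by (auto simp: Jp_def)
    ultimately show ?thesis using via by simp
  qed
qed

lemma symplectic_map_from_last_fixing_first:
  assumes n: "1 \<le> n" and w: "w \<in> vecs n" and w1: "symp n (unit_vec 0) w = 1"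
  shows "\<exists>f. symplectic_map n f \<and> f (unit_vec (2*n-1)) = w \<and> f (unit_vec 0) = unit_vec 0"
proof -
  let ?e0 = "unit_vec 0" and ?eL = "unit_vec (2*n-1)"
  have e0: "?e0 \<in> vecs n" and eL: "?eL \<in> vecs n" using n by (auto intro: unit_vec_vecs)
  have w_e0: "symp n w ?e0 = -1" using w1 symp_antisym[of n w ?e0] by simp
  have eL_e0: "symp n ?eL ?e0 = -1" using symp_last[OF n] by (simp add: unit_vec_def)
  show ?thesis
  proof (cases "symp n ?eL w = 0")
    case False
    then obtain f where f: "symplectic_map n f" "f ?eL = w"
      and fixing: "\<And>z. symp n w z = symp n ?eL z \<Longrightarrow> f z = z"
      using transvection_moves[OF eL w] by blast
    have "f ?e0 = ?e0" by (rule fixing) (simp only: w_e0 eL_e0)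
    then show ?thesis using f by blast
  next
    case True
    define z where "z = (\<lambda>i. ?eL i + ?e0 i)"
    have z: "z \<in> vecs n" unfolding z_def using eL e0 by (rule vecs_add)
    have "symp n ?eL z = -1"
      using eL_e0 by (simp add: z_def symp_add_right symp_self)
    moreover have "symp n z w = 1" "symp n z ?e0 = -1"
      using True w1 eL_e0 by (simp_all add: z_def symp_add_left symp_self)
    ultimately show ?thesis
      using w_e0 eL_e0 by (intro symplectic_map_moves_via[OF eL w z]) simp_all
  qed
qed

lemma symplectic_pair_transitive:
  assumes n: "1 \<le> n" and u: "u \<in> vecs n" and w: "w \<in> vecs n" and uw: "symp n u w = 1"
  shows "\<exists>f. symplectic_map n f \<and> f (unit_vec 0) = u \<and> f (unit_vec (2*n-1)) = w"
proof -
  have "u \<noteq> (\<lambda>_. 0)" using uw by (auto simp: symp_def)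
  then obtain f1 where f1: "symplectic_map n f1" "f1 (unit_vec 0) = u"
    using symplectic_map_from_first[OF n u] by blast
  then obtain w' where w': "w' \<in> vecs n" "f1 w' = w"
    using w by (auto simp: symplectic_map_def)
  have "symp n (unit_vec 0) w' = symp n (f1 (unit_vec 0)) (f1 w')"
    using f1(1) w'(1) unit_vec_vecs[of 0 n] n unfolding symplectic_map_def by auto
  then have "symp n (unit_vec 0) w' = 1" using f1 w' uw by simp
  then obtain f2 where f2: "symplectic_map n f2" "f2 (unit_vec (2*n-1)) = w'" "f2 (unit_vec 0) = unit_vec 0"
    using symplectic_map_from_last_fixing_first[OF n w'(1)] by blast
  show ?thesis using symplectic_map_comp[OF f1(1) f2(1)] f1 f2 w' by auto
qed

definition mat_right_inverse :: "nat \<Rightarrow> (nat \<Rightarrow> nat \<Rightarrow> complex) \<Rightarrow> (nat \<Rightarrow> nat \<Rightarrow> complex) \<Rightarrow> bool" where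
  "mat_right_inverse n g h \<longleftrightarrow> (\<forall>i<2*n. \<forall>j<2*n. (\<Sum>a<2*n. g i a * h a j) = (if i = j then 1 else 0))"

lemma symplectic_map_matrix:
  assumes f: "symplectic_map n f"
  shows "(\<lambda>i j. f (unit_vec j) i) \<in> sp_group n"
    and "\<exists>h. mat_right_inverse n (\<lambda>i j. f (unit_vec j) i) h"
proof -
  have f_symp: "\<And>x y. x \<in> vecs n \<Longrightarrow> y \<in> vecs n \<Longrightarrow> symp n (f x) (f y) = symp n x y"
    and f_lin: "\<And>v i. v \<in> vecs n \<Longrightarrow> f v i = (\<Sum>j<2*n. v j * f (unit_vec j) i)"
    and f_surj: "\<And>v. v \<in> vecs n \<Longrightarrow> \<exists>x\<in>vecs n. f x = v"
    using f by (auto simp: symplectic_map_def)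
  have "symp n (f (unit_vec i)) (f (unit_vec j)) = Jp n i j" if "i < 2*n" "j < 2*n" for i j
    using f_symp unit_vec_vecs symp_unit_vec_unit_vec that by simp
  then show "(\<lambda>i j. f (unit_vec j) i) \<in> sp_group n" by (simp add: sp_group_def symp_def)
  obtain f' where f': "\<And>v. v \<in> vecs n \<Longrightarrow> f' v \<in> vecs n \<and> f (f' v) = v"
    using f_surj by metis
  have inverse: "(\<Sum>a<2*n. f (unit_vec a) i * f' (unit_vec j) a) = (if i = j then 1 else 0)"
    if "j < 2*n" for i j
  proof -
    have "f (f' (unit_vec j)) i = (\<Sum>a<2*n. f' (unit_vec j) a * f (unit_vec a) i)"
      using f_lin f' unit_vec_vecs[OF that] by blast
    then have "(\<Sum>a<2*n. f (unit_vec a) i * f' (unit_vec j) a) = f (f' (unit_vec j)) i"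
      by (simp add: ac_simps)
    also have "\<dots> = unit_vec j i" using f' unit_vec_vecs[OF that] by simp
    finally show ?thesis by (simp add: unit_vec_def)
  qed
  show "\<exists>h. mat_right_inverse n (\<lambda>i j. f (unit_vec j) i) h"
    using inverse by (intro exI[of _ "\<lambda>a j. f' (unit_vec j) a"]) (simp add: mat_right_inverse_def)
qed

section \<open>The orbit of \<open>(M0, T0 a b)\<close>\<close>

definition col_sign :: "nat \<Rightarrow> nat \<Rightarrow> complex" where
  "col_sign n j = (if j < n then 1 else -1)"

lemma Jp_opposite: "j < 2*n \<Longrightarrow> Jp n (2*n-1-j) j = - col_sign n j"
  by (auto simp: Jp_def col_sign_def)

lemma sp_group_transpose_Jp:
  assumes g: "g \<in> sp_group n" and gh: "mat_right_inverse n g h" and ij: "i < 2*n" "j < 2*n"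
  shows "(\<Sum>b<2*n. g b i * Jp n b j) = (\<Sum>b<2*n. Jp n i b * h b j)"
proof -
  have "(\<Sum>b<2*n. Jp n i b * h b j)
      = (\<Sum>b<2*n. (\<Sum>c<2*n. \<Sum>d<2*n. g c i * Jp n c d * g d b) * h b j)"
    using g ij by (intro sum.cong) (auto simp: sp_group_def)
  also have "\<dots> = (\<Sum>b<2*n. \<Sum>c<2*n. \<Sum>d<2*n. (g c i * Jp n c d) * (g d b * h b j))"
    by (simp add: sum_distrib_right mult.assoc)
  also have "\<dots> = (\<Sum>c<2*n. \<Sum>d<2*n. \<Sum>b<2*n. (g c i * Jp n c d) * (g d b * h b j))"
    by (subst sum.swap) (rule sum.cong[OF refl], rule sum.swap)
  also have "\<dots> = (\<Sum>c<2*n. \<Sum>d<2*n. (g c i * Jp n c d) * (\<Sum>b<2*n. g d b * h b j))"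
    by (simp add: sum_distrib_left)
  also have "\<dots> = (\<Sum>c<2*n. \<Sum>d<2*n. (g c i * Jp n c d) * (if d = j then 1 else 0))"
    using gh ij by (intro sum.cong) (auto simp: mat_right_inverse_def)
  also have "\<dots> = (\<Sum>c<2*n. g c i * Jp n c j)"
    using ij by (intro sum.cong) (simp_all add: sum.delta' if_distrib cong: if_cong)
  finally show ?thesis by simp
qed

text \<open>Since \<open>h = J'\<^sup>-\<^sup>1 g\<^sup>T J'\<close>, the first and last rows of \<open>h\<close> are read off from the last and
  first columns of \<open>g\<close>.\<close>

lemma sp_group_inverse_rows:
  assumes n: "1 \<le> n" and g: "g \<in> sp_group n" and gh: "mat_right_inverse n g h" and j: "j < 2*n"
  shows "h 0 j = col_sign n j * g (2*n-1-j) (2*n-1)" "h (2*n-1) j = - col_sign n j * g (2*n-1-j) 0"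
proof -
  have L: "2*n-1 < 2*n" and Z: "0 < 2*n" using n by simp_all
  have "g (2*n-1-j) (2*n-1) * Jp n (2*n-1-j) j = Jp n (2*n-1) 0 * h 0 j"
    using sp_group_transpose_Jp[OF g gh L j] sum_Jp_left[OF j] sum_Jp_right[OF L, of "\<lambda>b. h b j"] n
    by simp
  then show "h 0 j = col_sign n j * g (2*n-1-j) (2*n-1)"
    using Jp_opposite[OF j] Jp_last_0[OF n] by (simp add: mult.commute)
  have "g (2*n-1-j) 0 * Jp n (2*n-1-j) j = Jp n 0 (2*n-1) * h (2*n-1) j"
    using sp_group_transpose_Jp[OF g gh Z j] sum_Jp_left[OF j] sum_Jp_right[OF Z, of "\<lambda>b. h b j"]
    by simp
  then show "h (2*n-1) j = - col_sign n j * g (2*n-1-j) 0"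
    using Jp_opposite[OF j] Jp_0_last[OF n] by (simp add: mult.commute)
qed

lemma M0_conj_entry:
  assumes n: "1 \<le> n" and i: "i < 2*n" and j: "j < 2*n"
  shows "(\<Sum>a<2*n. \<Sum>b<2*n. g i a * M0 n (a, b) * h b j) = g i 0 * h 0 j - g i (2*n-1) * h (2*n-1) j"
proof -
  let ?L = "2*n-1"
  have L: "?L \<noteq> 0" "?L < 2*n" "0 < 2*n" using n by auto
  have M0: "M0 n (a, b) = unit_vec 0 a * unit_vec 0 b - unit_vec ?L a * unit_vec ?L b" for a b
    using L by (auto simp: M0_def unit_vec_def)
  have "(\<Sum>a<2*n. \<Sum>b<2*n. g i a * M0 n (a, b) * h b j)
      = (\<Sum>a<2*n. \<Sum>b<2*n. (g i a * unit_vec 0 a) * (unit_vec 0 b * h b j))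
      - (\<Sum>a<2*n. \<Sum>b<2*n. (g i a * unit_vec ?L a) * (unit_vec ?L b * h b j))"
    unfolding M0 by (simp add: algebra_simps sum_subtractf)
  also have "\<dots> = (\<Sum>a<2*n. g i a * unit_vec 0 a) * (\<Sum>b<2*n. unit_vec 0 b * h b j)
      - (\<Sum>a<2*n. g i a * unit_vec ?L a) * (\<Sum>b<2*n. unit_vec ?L b * h b j)"
    by (simp add: sum_product)
  also have "\<dots> = g i 0 * h 0 j - g i ?L * h ?L j"
    using L by (simp only: sum_unit_vec_left sum_unit_vec_right)
  finally show ?thesis .
qed

lemma sum_product3:
  "(\<Sum>a\<in>A. \<Sum>b\<in>B. \<Sum>c\<in>C. p a * q b * r c) = sum p A * sum q B * (sum r C :: 'a::comm_semiring_0)"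
proof -
  have "sum q B * sum r C = (\<Sum>b\<in>B. \<Sum>c\<in>C. q b * r c)"
    by (rule sum_product)
  then have "sum p A * sum q B * sum r C = sum p A * (\<Sum>b\<in>B. \<Sum>c\<in>C. q b * r c)"
    by (simp only: mult.assoc)
  also have "\<dots> = (\<Sum>a\<in>A. p a * (\<Sum>b\<in>B. \<Sum>c\<in>C. q b * r c))"
    by (rule sum_distrib_right)
  also have "\<dots> = (\<Sum>a\<in>A. \<Sum>b\<in>B. \<Sum>c\<in>C. p a * (q b * r c))"
    by (simp add: sum_distrib_left)
  finally show ?thesis by (simp only: mult.assoc)
qed

lemma T0_conj_entry:
  assumes n: "1 \<le> n"
  shows "(\<Sum>a<2*n. \<Sum>b<2*n. \<Sum>c<2*n. g i a * g j b * g k c * T0 n A B (a, b, c))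
     = A * (g i 0 * g j 0 * g k 0) + B * (g i (2*n-1) * g j (2*n-1) * g k (2*n-1))"
proof -
  let ?L = "2*n-1"
  have L: "?L \<noteq> 0" "?L < 2*n" "0 < 2*n" using n by auto
  have T0: "g i a * g j b * g k c * T0 n A B (a, b, c)
      = A * ((g i a * unit_vec 0 a) * (g j b * unit_vec 0 b) * (g k c * unit_vec 0 c))
      + B * ((g i a * unit_vec ?L a) * (g j b * unit_vec ?L b) * (g k c * unit_vec ?L c))" for a b c
    using L by (auto simp: T0_def unit_vec_def)
  have "(\<Sum>a<2*n. \<Sum>b<2*n. \<Sum>c<2*n. g i a * g j b * g k c * T0 n A B (a, b, c))
      = A * ((\<Sum>a<2*n. g i a * unit_vec 0 a) * (\<Sum>b<2*n. g j b * unit_vec 0 b) * (\<Sum>c<2*n. g k c * unit_vec 0 c))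
      + B * ((\<Sum>a<2*n. g i a * unit_vec ?L a) * (\<Sum>b<2*n. g j b * unit_vec ?L b) * (\<Sum>c<2*n. g k c * unit_vec ?L c))"
    unfolding T0 by (simp only: sum.distrib flip: sum_distrib_left sum_product3)
  then show ?thesis
    using L by (simp only: sum_unit_vec_right)
qed

text \<open>The first component is \<open>-(u w\<^sup>T + w u\<^sup>T) J'\<close>, the second \<open>c (u\<^sup>3 + w\<^sup>3)\<close>.\<close>

definition quot_point ::
  "nat \<Rightarrow> complex \<Rightarrow> (nat \<Rightarrow> complex) \<Rightarrow> (nat \<Rightarrow> complex) \<Rightarrow> (nat \<times> nat) + (nat \<times> nat \<times> nat) \<Rightarrow> complex"
  where
  "quot_point n c u w = pt
     (\<lambda>(i, j). if i < 2*n \<and> j < 2*n then col_sign n j * (u i * w (2*n-1-j) + w i * u (2*n-1-j)) else 0)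
     (\<lambda>(i, j, k). if i < 2*n \<and> j < 2*n \<and> k < 2*n then c * (u i * u j * u k + w i * w j * w k) else 0)"

definition orbit_point ::
  "nat \<Rightarrow> complex \<Rightarrow> complex \<Rightarrow> (nat \<Rightarrow> nat \<Rightarrow> complex) \<Rightarrow> (nat \<Rightarrow> nat \<Rightarrow> complex) \<Rightarrow> complex
     \<Rightarrow> (nat \<times> nat) + (nat \<times> nat \<times> nat) \<Rightarrow> complex"
  where
  "orbit_point n A B g h t = pt
     (\<lambda>(i, j). if i < 2*n \<and> j < 2*n then t^2 * (\<Sum>a<2*n. \<Sum>b<2*n. g i a * M0 n (a, b) * h b j) else 0)
     (\<lambda>(i, j, k). if i < 2*n \<and> j < 2*n \<and> k < 2*n then
        t^3 * (\<Sum>a<2*n. \<Sum>b<2*n. \<Sum>c<2*n. g i a * g j b * g k c * T0 n A B (a, b, c)) else 0)"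

lemma sp_orbit_eq:
  "sp_orbit n (M0 n) (T0 n A B)
     = {orbit_point n A B g h t | g h t. g \<in> sp_group n \<and> mat_right_inverse n g h \<and> t \<noteq> 0}"
  by (simp add: sp_orbit_def orbit_point_def mat_right_inverse_def)

text \<open>The weights \<open>2\<close> and \<open>3\<close> of \<open>t\<close> are absorbed by scaling both columns of \<open>g\<close> by \<open>t\<close>.\<close>

lemma orbit_point_eq_quot_point:
  assumes n: "1 \<le> n" and g: "g \<in> sp_group n" and gh: "mat_right_inverse n g h"
    and ab: "\<alpha> * \<beta> = 1" "c * \<alpha>^3 = A" "c * \<beta>^3 = B"
  shows "orbit_point n A B g h t = quot_point n c (\<lambda>i. \<alpha> * t * g i 0) (\<lambda>i. \<beta> * t * g i (2*n-1))"
proof -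
  let ?L = "2*n-1"
  have M: "t^2 * (\<Sum>a<2*n. \<Sum>b<2*n. g i a * M0 n (a, b) * h b j)
      = col_sign n j * ((\<alpha> * t * g i 0) * (\<beta> * t * g (2*n-1-j) ?L) + (\<beta> * t * g i ?L) * (\<alpha> * t * g (2*n-1-j) 0))"
    if "i < 2*n" "j < 2*n" for i j
  proof -
    have "t^2 * (\<Sum>a<2*n. \<Sum>b<2*n. g i a * M0 n (a, b) * h b j)
        = t^2 * (g i 0 * (col_sign n j * g (2*n-1-j) ?L) - g i ?L * (- col_sign n j * g (2*n-1-j) 0))"
      using M0_conj_entry[OF n that] sp_group_inverse_rows[OF n g gh that(2)] by simp
    also have "\<dots> = col_sign n j * ((\<alpha> * \<beta>) * t^2 * (g i 0 * g (2*n-1-j) ?L + g i ?L * g (2*n-1-j) 0))"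
      using ab(1) by (simp add: algebra_simps)
    finally show ?thesis by (simp add: algebra_simps power2_eq_square)
  qed
  have T: "t^3 * (\<Sum>a<2*n. \<Sum>b<2*n. \<Sum>c<2*n. g i a * g j b * g k c * T0 n A B (a, b, c))
      = c * ((\<alpha> * t * g i 0) * (\<alpha> * t * g j 0) * (\<alpha> * t * g k 0)
           + (\<beta> * t * g i ?L) * (\<beta> * t * g j ?L) * (\<beta> * t * g k ?L))" for i j k
    by (simp only: T0_conj_entry[OF n] flip: ab(2,3)) (simp add: algebra_simps power3_eq_cube)
  show ?thesis
  proof
    fix z :: "(nat \<times> nat) + (nat \<times> nat \<times> nat)"
    show "orbit_point n A B g h t z = quot_point n c (\<lambda>i. \<alpha> * t * g i 0) (\<lambda>i. \<beta> * t * g i ?L) z"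
    proof (cases z)
      case (Inl p)
      then show ?thesis using M by (cases p) (simp add: orbit_point_def quot_point_def pt_def)
    next
      case (Inr p)
      then show ?thesis using T by (cases p) (simp add: orbit_point_def quot_point_def pt_def)
    qed
  qed
qed

lemma sp_orbit_subset_quot_points:
  assumes n: "1 \<le> n" and ab: "\<alpha> * \<beta> = 1" "c * \<alpha>^3 = A" "c * \<beta>^3 = B"
    and z: "z \<in> sp_orbit n (M0 n) (T0 n A B)"
  shows "\<exists>u w. z = quot_point n c u w"
  using z orbit_point_eq_quot_point[OF n _ _ ab] unfolding sp_orbit_eq by blast

text \<open>If \<open>symp n U W = t\<^sup>2 \<noteq> 0\<close>, then \<open>U / (\<alpha> t)\<close> and \<open>W / (\<beta> t)\<close> are the first and last column of
  a symplectic matrix.\<close>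

lemma quot_point_in_sp_orbit:
  assumes n: "1 \<le> n" and ab: "\<alpha> * \<beta> = 1" "c * \<alpha>^3 = A" "c * \<beta>^3 = B"
    and U: "U \<in> vecs n" and W: "W \<in> vecs n" and UW: "symp n U W \<noteq> 0"
  shows "quot_point n c U W \<in> sp_orbit n (M0 n) (T0 n A B)"
proof -
  define t where "t = csqrt (symp n U W)"
  have t2: "t^2 = symp n U W" by (simp add: t_def)
  have t0: "t \<noteq> 0" using UW t2 by auto
  have ab0: "\<alpha> \<noteq> 0" "\<beta> \<noteq> 0" using ab by auto
  define u where "u = (\<lambda>i. (1 / (\<alpha> * t)) * U i)"
  define w where "w = (\<lambda>i. (1 / (\<beta> * t)) * W i)"
  have "symp n u w = symp n U W / ((\<alpha> * \<beta>) * t^2)"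
    unfolding u_def w_def symp_scale_left symp_scale_right by (simp add: power2_eq_square field_simps)
  then have "symp n u w = 1" using ab t2 UW by simp
  moreover have "u \<in> vecs n" "w \<in> vecs n" unfolding u_def w_def using U W by (blast intro: vecs_scale)+
  ultimately obtain f where f: "symplectic_map n f" "f (unit_vec 0) = u" "f (unit_vec (2*n-1)) = w"
    using symplectic_pair_transitive[OF n] by blast
  define g where "g = (\<lambda>i j. f (unit_vec j) i)"
  obtain h where g: "g \<in> sp_group n" and gh: "mat_right_inverse n g h"
    using symplectic_map_matrix[OF f(1)] unfolding g_def by blast
  have "(\<lambda>i. \<alpha> * t * g i 0) = U" "(\<lambda>i. \<beta> * t * g i (2*n-1)) = W"
    using ab0 t0 f by (auto simp: g_def u_def w_def)
  then have "orbit_point n A B g h t = quot_point n c U W"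
    using orbit_point_eq_quot_point[OF n g gh ab] by simp
  then show ?thesis
    unfolding sp_orbit_eq mem_Collect_eq using g gh t0 by (intro exI[of _ g] exI[of _ h] exI[of _ t]) simp
qed

text \<open>Points with \<open>symp n U W = 0\<close> are limits of orbit points along \<open>(U + e v\<^sub>1, W + e v\<^sub>2\<^sub>n)\<close>.\<close>

lemma quot_point_in_closure:
  assumes n: "1 \<le> n" and ab: "\<alpha> * \<beta> = 1" "c * \<alpha>^3 = A" "c * \<beta>^3 = B"
    and U: "U \<in> vecs n" and W: "W \<in> vecs n"
  shows "quot_point n c U W \<in> zariski_closure (sp_orbit n (M0 n) (T0 n A B))"
  unfolding zariski_closure_def
proof (intro CollectI allI impI, elim conjE)
  fix p assume p: "poly_fun p" and van: "\<forall>y\<in>sp_orbit n (M0 n) (T0 n A B). p y = 0"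
  let ?U = "\<lambda>e i. U i + e * unit_vec 0 i" and ?W = "\<lambda>e i. W i + e * unit_vec (2*n-1) i"
  define a where "a = symp n U (unit_vec (2*n-1)) + symp n (unit_vec 0) W"
  have symp_UW: "symp n (?U e) (?W e) = symp n U W + e * (a + e)" for e
    using symp_first[OF n, of "unit_vec (2*n-1)"]
    by (simp add: a_def symp_lin_left symp_lin_right algebra_simps unit_vec_def)
  show "p (quot_point n c U W) = 0"
  proof (cases "symp n U W = 0")
    case False
    then show ?thesis using quot_point_in_sp_orbit[OF n ab U W] van by blast
  next
    case True
    have "p (quot_point n c (?U e) (?W e)) = 0" if "e \<noteq> 0" "e \<noteq> - a" for e
    proof -
      have "?U e \<in> vecs n" "?W e \<in> vecs n"
        using U W n by (auto intro!: vecs_add vecs_scale unit_vec_vecs)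
      moreover have "e * (a + e) \<noteq> 0" using that by (auto simp: add_eq_0_iff)
      then have "symp n (?U e) (?W e) \<noteq> 0" using True symp_UW[of e] by simp
      ultimately show ?thesis using quot_point_in_sp_orbit[OF n ab] van by blast
    qed
    moreover have "isCont (\<lambda>e. quot_point n c (?U e) (?W e) j) 0" for j
      by (cases j) (auto simp: quot_point_def pt_def intro!: continuous_intros isCont_If_const)
    ultimately show ?thesis
      using poly_fun_vanishes_at_limit[OF p, of "\<lambda>e. quot_point n c (?U e) (?W e)" "- a"] by simp
  qed
qed

section \<open>Eigen-coordinates and the quotient map\<close>

text \<open>Copy \<open>k\<close> of \<open>h_2\<close> corresponds to the basis vector \<open>k\<close> of \<open>V\<close>, copy \<open>k\<close> of \<open>h_2\<^sup>*\<close>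
  to \<open>n + k\<close>; \<open>u\<close> and \<open>w\<close> are the coordinates along the eigenvectors \<open>(1, \<omega>, \<omega>\<^sup>2)\<close> and
  \<open>(1, \<omega>\<^sup>2, \<omega>)\<close> of the 3-cycle.\<close>

definition vindex :: "nat \<Rightarrow> nat \<Rightarrow> bool \<Rightarrow> nat" where
  "vindex n k b = (if b then n + k else k)"

definition vcoord :: "nat \<Rightarrow> nat \<Rightarrow> nat \<Rightarrow> nat \<times> bool \<times> nat" where
  "vcoord n r d = (r mod n, n \<le> r, d)"

definition of_eig :: "nat \<Rightarrow> (nat \<Rightarrow> complex) \<Rightarrow> (nat \<Rightarrow> complex) \<Rightarrow> nat \<times> bool \<times> nat \<Rightarrow> complex" where
  "of_eig n u w = (\<lambda>(k, b, d). if k < n \<and> d < 3 then \<omega>^d * u (vindex n k b) + \<omega>^(2*d) * w (vindex n k b) else 0)"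

definition eig_u :: "nat \<Rightarrow> (nat \<times> bool \<times> nat \<Rightarrow> complex) \<Rightarrow> nat \<Rightarrow> complex" where
  "eig_u n x r = (if r < 2*n then (x (vcoord n r 0) + \<omega>^2 * x (vcoord n r 1) + \<omega> * x (vcoord n r 2)) / 3 else 0)"

definition eig_w :: "nat \<Rightarrow> (nat \<times> bool \<times> nat \<Rightarrow> complex) \<Rightarrow> nat \<Rightarrow> complex" where
  "eig_w n x r = (if r < 2*n then (x (vcoord n r 0) + \<omega> * x (vcoord n r 1) + \<omega>^2 * x (vcoord n r 2)) / 3 else 0)"

lemma vindex_less: "k < n \<Longrightarrow> vindex n k b < 2*n"
  by (auto simp: vindex_def)

lemma vcoord_vindex: "k < n \<Longrightarrow> vcoord n (vindex n k b) d = (k, b, d)"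
  by (auto simp: vindex_def vcoord_def)

lemma vindex_vcoord: "r < 2*n \<Longrightarrow> vcoord n r d = (k, b, d') \<Longrightarrow> k < n \<and> vindex n k b = r \<and> d' = d"
  by (auto simp: vindex_def vcoord_def le_mod_geq)

lemma of_eig_vcoord:
  "r < 2*n \<Longrightarrow> d < 3 \<Longrightarrow> of_eig n u w (vcoord n r d) = \<omega>^d * u r + \<omega>^(2*d) * w r"
  by (cases "vcoord n r d") (auto simp: of_eig_def dest: vindex_vcoord)

lemma eig_u_vecs: "eig_u n x \<in> vecs n"
  and eig_w_vecs: "eig_w n x \<in> vecs n"
  by (simp_all add: eig_u_def eig_w_def vecs_def)

lemma of_eig_refl_space: "of_eig n u w \<in> refl_space n"
proof -
  have "a + b + (\<omega> * a + \<omega>^2 * b) + (\<omega>^2 * a + \<omega>^4 * b) = (1 + \<omega> + \<omega>^2) * a + (1 + \<omega> + \<omega>^2) * b"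
    for a b using omega_cube by algebra
  then show ?thesis
    unfolding refl_space_def of_eig_def using omega_sum by (auto simp: eval_nat_numeral)
qed

lemma of_eig_eig:
  assumes x: "x \<in> refl_space n"
  shows "of_eig n (eig_u n x) (eig_w n x) = x"
proof (rule ext, clarify)
  fix k b d
  show "of_eig n (eig_u n x) (eig_w n x) (k, b, d) = x (k, b, d)"
  proof (cases "k < n \<and> d < 3")
    case False
    then show ?thesis using x by (auto simp: of_eig_def refl_space_def)
  next
    case True
    define x0 x1 x2 where "x0 = x (k, b, 0)" and "x1 = x (k, b, 1)" and "x2 = x (k, b, 2)"
    define U W where "U = eig_u n x (vindex n k b)" and "W = eig_w n x (vindex n k b)"
    have "x0 + x1 + x2 = 0" using x True by (simp add: refl_space_def x0_def x1_def x2_def)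
    moreover have "3 * U = x0 + \<omega>^2 * x1 + \<omega> * x2" "3 * W = x0 + \<omega> * x1 + \<omega>^2 * x2"
      using True by (simp_all add: U_def W_def eig_u_def eig_w_def vindex_less vcoord_vindex x0_def x1_def x2_def)
    ultimately have eqs: "U + W = x0" "\<omega> * U + \<omega>^2 * W = x1" "\<omega>^2 * U + \<omega>^4 * W = x2"
      using omega_cube omega_sum by algebra+
    consider "d = 0" | "d = 1" | "d = 2" using True by linarith
    then have "\<omega>^d * U + \<omega>^(2*d) * W = x (k, b, d)"
      using eqs by cases (simp_all add: x0_def x1_def x2_def)
    then show ?thesis using True unfolding U_def W_def by (simp add: of_eig_def)
  qed
qed

text \<open>Written with power sums over the three coordinates, the map is visibly
  \<open>S_3\<close>-invariant; in eigen-coordinates it is \<open>quot_point\<close>.\<close>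

definition quot_map ::
  "nat \<Rightarrow> complex \<Rightarrow> (nat \<times> bool \<times> nat \<Rightarrow> complex) \<Rightarrow> (nat \<times> nat) + (nat \<times> nat \<times> nat) \<Rightarrow> complex"
  where
  "quot_map n c x = pt
     (\<lambda>(i, j). if i < 2*n \<and> j < 2*n then
        col_sign n j / 3 * (\<Sum>d<3. x (vcoord n i d) * x (vcoord n (2*n-1-j) d)) else 0)
     (\<lambda>(i, j, k). if i < 2*n \<and> j < 2*n \<and> k < 2*n then
        c / 3 * (\<Sum>d<3. x (vcoord n i d) * x (vcoord n j d) * x (vcoord n k d)) else 0)"

lemma poly_fun_quot_map: "poly_fun (\<lambda>x. quot_map n c x j)"
proof (cases j)
  case (Inl a)
  then show ?thesis
    by (cases a) (auto simp: quot_map_def pt_def intro!: poly_fun_If poly_fun_sum pf_mult pf_const pf_var)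
next
  case (Inr a)
  then show ?thesis
    by (cases a) (auto simp: quot_map_def pt_def intro!: poly_fun_If poly_fun_sum pf_mult pf_const pf_var)
qed

lemma quot_map_S3_invariant:
  assumes "\<sigma> \<in> S3"
  shows "quot_map n c (S3_act \<sigma> x) = quot_map n c x"
proof -
  have "{0, 1, 2} = {..<3::nat}" by auto
  then have "inv \<sigma> permutes {..<3}"
    using assms permutes_inv unfolding S3_def by fastforce
  then have perm: "(\<Sum>d<3. f (inv \<sigma> d)) = (\<Sum>d<3. f d)" for f :: "nat \<Rightarrow> complex"
    using sum.permute[of "inv \<sigma>" "{..<3}" f] by (simp add: comp_def)
  have act: "S3_act \<sigma> x (vcoord n r d) = x (vcoord n r (inv \<sigma> d))" for r d
    by (simp add: S3_act_def vcoord_def)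
  have M: "(\<Sum>d<3. S3_act \<sigma> x (vcoord n i d) * S3_act \<sigma> x (vcoord n j d))
      = (\<Sum>d<3. x (vcoord n i d) * x (vcoord n j d))"
    and T: "(\<Sum>d<3. S3_act \<sigma> x (vcoord n i d) * S3_act \<sigma> x (vcoord n j d) * S3_act \<sigma> x (vcoord n k d))
      = (\<Sum>d<3. x (vcoord n i d) * x (vcoord n j d) * x (vcoord n k d))" for i j k
    using perm[of "\<lambda>d. x (vcoord n i d) * x (vcoord n j d)"]
      perm[of "\<lambda>d. x (vcoord n i d) * x (vcoord n j d) * x (vcoord n k d)"]
    by (simp_all add: act)
  show ?thesis
    unfolding quot_map_def M T ..
qed

lemma omega_power_sum2:
  "(\<Sum>d<3. (\<omega>^d * a + \<omega>^(2*d) * b) * (\<omega>^d * a' + \<omega>^(2*d) * b')) = 3 * (a * b' + b * a')"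
proof -
  have "a * a' + (a * b' + b * a') + b * b' + (\<omega> * a + \<omega>^2 * b) * (\<omega> * a' + \<omega>^2 * b')
      + (\<omega>^2 * a + \<omega>^4 * b) * (\<omega>^2 * a' + \<omega>^4 * b') = 3 * (a * b' + b * a')"
    using omega_cube omega_sum by algebra
  then show ?thesis by (simp add: eval_nat_numeral algebra_simps)
qed

lemma omega_power_sum3:
  "(\<Sum>d<3. (\<omega>^d * a + \<omega>^(2*d) * b) * (\<omega>^d * a' + \<omega>^(2*d) * b') * (\<omega>^d * a'' + \<omega>^(2*d) * b''))
     = 3 * (a * a' * a'' + b * b' * b'')"
proof -
  have "(a + b) * (a' + b') * (a'' + b'') + (\<omega> * a + \<omega>^2 * b) * (\<omega> * a' + \<omega>^2 * b') * (\<omega> * a'' + \<omega>^2 * b'')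
      + (\<omega>^2 * a + \<omega>^4 * b) * (\<omega>^2 * a' + \<omega>^4 * b') * (\<omega>^2 * a'' + \<omega>^4 * b'')
      = 3 * (a * a' * a'' + b * b' * b'')"
    using omega_cube omega_sum by algebra
  then show ?thesis by (simp add: eval_nat_numeral)
qed

lemma quot_map_of_eig: "quot_map n c (of_eig n u w) = quot_point n c u w"
proof -
  let ?x = "of_eig n u w"
  have M: "(\<Sum>d<3. ?x (vcoord n i d) * ?x (vcoord n j d)) = 3 * (u i * w j + w i * u j)"
    if "i < 2*n" "j < 2*n" for i j
  proof -
    have "(\<Sum>d<3. ?x (vcoord n i d) * ?x (vcoord n j d))
        = (\<Sum>d<3. (\<omega>^d * u i + \<omega>^(2*d) * w i) * (\<omega>^d * u j + \<omega>^(2*d) * w j))"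
      using that by (intro sum.cong) (simp_all add: of_eig_vcoord)
    then show ?thesis by (simp only: omega_power_sum2)
  qed
  have T: "(\<Sum>d<3. ?x (vcoord n i d) * ?x (vcoord n j d) * ?x (vcoord n k d))
      = 3 * (u i * u j * u k + w i * w j * w k)"
    if "i < 2*n" "j < 2*n" "k < 2*n" for i j k
  proof -
    have "(\<Sum>d<3. ?x (vcoord n i d) * ?x (vcoord n j d) * ?x (vcoord n k d))
        = (\<Sum>d<3. (\<omega>^d * u i + \<omega>^(2*d) * w i) * (\<omega>^d * u j + \<omega>^(2*d) * w j)
            * (\<omega>^d * u k + \<omega>^(2*d) * w k))"
      using that by (intro sum.cong) (simp_all add: of_eig_vcoord)
    then show ?thesis by (simp only: omega_power_sum3)
  qed
  show ?thesis
  proof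
    fix z :: "(nat \<times> nat) + (nat \<times> nat \<times> nat)"
    show "quot_map n c ?x z = quot_point n c u w z"
    proof (cases z)
      case (Inl p)
      then show ?thesis by (cases p) (simp add: quot_map_def quot_point_def pt_def M)
    next
      case (Inr p)
      then show ?thesis by (cases p) (simp add: quot_map_def quot_point_def pt_def T)
    qed
  qed
qed

lemma quot_map_eq_quot_point: "x \<in> refl_space n \<Longrightarrow> quot_map n c x = quot_point n c (eig_u n x) (eig_w n x)"
  using quot_map_of_eig[of n c "eig_u n x" "eig_w n x"] by (simp add: of_eig_eig)

lemma quot_map_image:
  assumes "1 \<le> n" and "\<alpha> * \<beta> = 1" "c * \<alpha>^3 = A" "c * \<beta>^3 = B"
  shows "quot_map n c ` refl_space n \<subseteq> zariski_closure (sp_orbit n (M0 n) (T0 n A B))"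
  using quot_point_in_closure[OF assms eig_u_vecs eig_w_vecs] by (auto simp: quot_map_eq_quot_point)

lemma pullback_injective:
  assumes n: "1 \<le> n" and ab: "\<alpha> * \<beta> = 1" "c * \<alpha>^3 = A" "c * \<beta>^3 = B"
    and p: "poly_fun p" and vanish: "\<forall>x\<in>refl_space n. p (quot_map n c x) = 0"
    and y: "y \<in> zariski_closure (sp_orbit n (M0 n) (T0 n A B))"
  shows "p y = 0"
proof -
  have "p z = 0" if z: "z \<in> sp_orbit n (M0 n) (T0 n A B)" for z
  proof -
    obtain u w where "z = quot_point n c u w" using sp_orbit_subset_quot_points[OF n ab z] by blast
    then show ?thesis using vanish of_eig_refl_space quot_map_of_eig by metis
  qed
  then show ?thesis using p y unfolding zariski_closure_def by blast
qed

section \<open>Invariant polynomials\<close>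

type_synonym pair_fun = "(nat \<Rightarrow> complex) \<Rightarrow> (nat \<Rightarrow> complex) \<Rightarrow> complex"

text \<open>Polynomials in \<open>u\<^sub>r, w\<^sub>r\<close> (\<open>r < N\<close>) on which \<open>(u, w) \<mapsto> (\<omega> u, \<omega>\<^sup>2 w)\<close> acts by
  \<open>\<omega>\<^sup>k\<close>: for \<open>k = 0\<close> the ring generated by the invariant monomials of degree at most 3, for
  \<open>k = 1, 2\<close> modules over it.\<close>

inductive weight0 :: "nat \<Rightarrow> pair_fun \<Rightarrow> bool" for N where
  weight0_const: "weight0 N (\<lambda>u w. c)"
| weight0_uw: "r < N \<Longrightarrow> s < N \<Longrightarrow> weight0 N (\<lambda>u w. u r * w s)"
| weight0_uuu: "r < N \<Longrightarrow> s < N \<Longrightarrow> t < N \<Longrightarrow> weight0 N (\<lambda>u w. u r * u s * u t)"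
| weight0_www: "r < N \<Longrightarrow> s < N \<Longrightarrow> t < N \<Longrightarrow> weight0 N (\<lambda>u w. w r * w s * w t)"
| weight0_add: "weight0 N f \<Longrightarrow> weight0 N g \<Longrightarrow> weight0 N (\<lambda>u w. f u w + g u w)"
| weight0_mult: "weight0 N f \<Longrightarrow> weight0 N g \<Longrightarrow> weight0 N (\<lambda>u w. f u w * g u w)"

inductive weight1 :: "nat \<Rightarrow> pair_fun \<Rightarrow> bool" for N where
  weight1_zero: "weight1 N (\<lambda>u w. 0)"
| weight1_u: "r < N \<Longrightarrow> weight0 N f \<Longrightarrow> weight1 N (\<lambda>u w. u r * f u w)"
| weight1_ww: "r < N \<Longrightarrow> s < N \<Longrightarrow> weight0 N f \<Longrightarrow> weight1 N (\<lambda>u w. w r * w s * f u w)"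
| weight1_add: "weight1 N f \<Longrightarrow> weight1 N g \<Longrightarrow> weight1 N (\<lambda>u w. f u w + g u w)"

inductive weight2 :: "nat \<Rightarrow> pair_fun \<Rightarrow> bool" for N where
  weight2_zero: "weight2 N (\<lambda>u w. 0)"
| weight2_uu: "r < N \<Longrightarrow> s < N \<Longrightarrow> weight0 N f \<Longrightarrow> weight2 N (\<lambda>u w. u r * u s * f u w)"
| weight2_w: "r < N \<Longrightarrow> weight0 N f \<Longrightarrow> weight2 N (\<lambda>u w. w r * f u w)"
| weight2_add: "weight2 N f \<Longrightarrow> weight2 N g \<Longrightarrow> weight2 N (\<lambda>u w. f u w + g u w)"

lemma weight0_times_weight1: "weight1 N g \<Longrightarrow> weight0 N f \<Longrightarrow> weight1 N (\<lambda>u w. f u w * g u w)"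
proof (induction g rule: weight1.induct)
  case (weight1_u r g)
  have "weight1 N (\<lambda>u w. u r * (f u w * g u w))" by (intro weight1.weight1_u weight0_mult weight1_u)
  then show ?case by (simp add: ac_simps)
next
  case (weight1_ww r s g)
  have "weight1 N (\<lambda>u w. w r * w s * (f u w * g u w))" by (intro weight1.weight1_ww weight0_mult weight1_ww)
  then show ?case by (simp add: ac_simps)
next
  case (weight1_add g1 g2)
  have "weight1 N (\<lambda>u w. f u w * g1 u w + f u w * g2 u w)" by (intro weight1.weight1_add weight1_add)
  then show ?case by (simp add: distrib_left)
qed (simp add: weight1.weight1_zero)

lemma weight0_times_weight2: "weight2 N g \<Longrightarrow> weight0 N f \<Longrightarrow> weight2 N (\<lambda>u w. f u w * g u w)"
proof (induction g rule: weight2.induct)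
  case (weight2_uu r s g)
  have "weight2 N (\<lambda>u w. u r * u s * (f u w * g u w))" by (intro weight2.weight2_uu weight0_mult weight2_uu)
  then show ?case by (simp add: ac_simps)
next
  case (weight2_w r g)
  have "weight2 N (\<lambda>u w. w r * (f u w * g u w))" by (intro weight2.weight2_w weight0_mult weight2_w)
  then show ?case by (simp add: ac_simps)
next
  case (weight2_add g1 g2)
  have "weight2 N (\<lambda>u w. f u w * g1 u w + f u w * g2 u w)" by (intro weight2.weight2_add weight2_add)
  then show ?case by (simp add: distrib_left)
qed (simp add: weight2.weight2_zero)

lemma weight1_times_weight1: "weight1 N f \<Longrightarrow> weight1 N g \<Longrightarrow> weight2 N (\<lambda>u w. f u w * g u w)"
proof (induction f arbitrary: g rule: weight1.induct)
  case (weight1_u r f)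
  note outer = weight1_u(1,2)
  from weight1_u(3) show ?case
  proof (induction g rule: weight1.induct)
    case (weight1_u s g)
    have "weight2 N (\<lambda>u w. u r * u s * (f u w * g u w))"
      by (intro weight2.weight2_uu weight0_mult weight1_u outer)
    then show ?case by (simp add: ac_simps)
  next
    case (weight1_ww s t g)
    have "weight2 N (\<lambda>u w. w t * ((u r * w s) * (f u w * g u w)))"
      by (intro weight2.weight2_w weight0_uw weight0_mult weight1_u weight1_ww outer)
    then show ?case by (simp add: ac_simps)
  next
    case (weight1_add g1 g2)
    then show ?case by (simp add: distrib_left weight2.weight2_add)
  qed (simp add: weight2.weight2_zero)
next
  case (weight1_ww r s f)
  note outer = weight1_ww(1,2,3)
  from weight1_ww(4) show ?case
  proof (induction g rule: weight1.induct)
    case (weight1_u p g)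
    have "weight2 N (\<lambda>u w. w s * ((u p * w r) * (f u w * g u w)))"
      by (intro weight2.weight2_w weight0_uw weight0_mult weight1_ww weight1_u outer)
    then show ?case by (simp add: ac_simps)
  next
    case (weight1_ww p q g)
    have "weight2 N (\<lambda>u w. w q * ((w r * w s * w p) * (f u w * g u w)))"
      by (intro weight2.weight2_w weight0_www weight0_mult weight1_ww outer)
    then show ?case by (simp add: ac_simps)
  next
    case (weight1_add g1 g2)
    then show ?case by (simp add: distrib_left weight2.weight2_add)
  qed (simp add: weight2.weight2_zero)
next
  case (weight1_add f1 f2)
  then show ?case by (simp add: distrib_right weight2.weight2_add)
qed (simp add: weight2.weight2_zero)

lemma weight1_times_weight2: "weight1 N f \<Longrightarrow> weight2 N g \<Longrightarrow> weight0 N (\<lambda>u w. f u w * g u w)"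
proof (induction f arbitrary: g rule: weight1.induct)
  case (weight1_u r f)
  note outer = weight1_u(1,2)
  from weight1_u(3) show ?case
  proof (induction g rule: weight2.induct)
    case (weight2_uu s t g)
    have "weight0 N (\<lambda>u w. (u r * u s * u t) * (f u w * g u w))"
      by (intro weight0_uuu weight0_mult weight1_u weight2_uu outer)
    then show ?case by (simp add: ac_simps)
  next
    case (weight2_w s g)
    have "weight0 N (\<lambda>u w. (u r * w s) * (f u w * g u w))"
      by (intro weight0_uw weight0_mult weight1_u weight2_w outer)
    then show ?case by (simp add: ac_simps)
  next
    case (weight2_add g1 g2)
    then show ?case by (simp add: distrib_left weight0_add)
  qed (simp add: weight0_const[of N 0])
next
  case (weight1_ww r s f)
  note outer = weight1_ww(1,2,3)
  from weight1_ww(4) show ?case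
  proof (induction g rule: weight2.induct)
    case (weight2_uu p q g)
    have "weight0 N (\<lambda>u w. (u p * w r) * (u q * w s) * (f u w * g u w))"
      by (intro weight0_uw weight0_mult weight1_ww weight2_uu outer)
    then show ?case by (simp add: ac_simps)
  next
    case (weight2_w p g)
    have "weight0 N (\<lambda>u w. (w r * w s * w p) * (f u w * g u w))"
      by (intro weight0_www weight0_mult weight1_ww weight2_w outer)
    then show ?case by (simp add: ac_simps)
  next
    case (weight2_add g1 g2)
    then show ?case by (simp add: distrib_left weight0_add)
  qed (simp add: weight0_const[of N 0])
next
  case (weight1_add f1 f2)
  then show ?case by (simp add: distrib_right weight0_add)
qed (simp add: weight0_const[of N 0])

lemma weight2_times_weight2: "weight2 N f \<Longrightarrow> weight2 N g \<Longrightarrow> weight1 N (\<lambda>u w. f u w * g u w)"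
proof (induction f arbitrary: g rule: weight2.induct)
  case (weight2_uu r s f)
  note outer = weight2_uu(1,2,3)
  from weight2_uu(4) show ?case
  proof (induction g rule: weight2.induct)
    case (weight2_uu p q g)
    have "weight1 N (\<lambda>u w. u q * ((u r * u s * u p) * (f u w * g u w)))"
      by (intro weight1.weight1_u weight0_uuu weight0_mult weight2_uu outer)
    then show ?case by (simp add: ac_simps)
  next
    case (weight2_w p g)
    have "weight1 N (\<lambda>u w. u s * ((u r * w p) * (f u w * g u w)))"
      by (intro weight1.weight1_u weight0_uw weight0_mult weight2_uu weight2_w outer)
    then show ?case by (simp add: ac_simps)
  next
    case (weight2_add g1 g2)
    then show ?case by (simp add: distrib_left weight1.weight1_add)
  qed (simp add: weight1.weight1_zero)
next
  case (weight2_w r f)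
  note outer = weight2_w(1,2)
  from weight2_w(3) show ?case
  proof (induction g rule: weight2.induct)
    case (weight2_uu p q g)
    have "weight1 N (\<lambda>u w. u q * ((u p * w r) * (f u w * g u w)))"
      by (intro weight1.weight1_u weight0_uw weight0_mult weight2_w weight2_uu outer)
    then show ?case by (simp add: ac_simps)
  next
    case (weight2_w p g)
    have "weight1 N (\<lambda>u w. w r * w p * (f u w * g u w))"
      by (intro weight1.weight1_ww weight0_mult weight2_w outer)
    then show ?case by (simp add: ac_simps)
  next
    case (weight2_add g1 g2)
    then show ?case by (simp add: distrib_left weight1.weight1_add)
  qed (simp add: weight1.weight1_zero)
next
  case (weight2_add f1 f2)
  then show ?case by (simp add: distrib_right weight1.weight1_add)
qed (simp add: weight1.weight1_zero)

lemma weight0_rotate: "weight0 N f \<Longrightarrow> f (\<lambda>i. \<omega> * u i) (\<lambda>i. \<omega>^2 * w i) = f u w"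
proof (induction rule: weight0.induct)
  case (weight0_uw r s)
  have "\<omega> * u r * (\<omega>^2 * w s) = u r * w s" using omega_cube by algebra
  then show ?case by simp
next
  case (weight0_uuu r s t)
  have "\<omega> * u r * (\<omega> * u s) * (\<omega> * u t) = u r * u s * u t" using omega_cube by algebra
  then show ?case by simp
next
  case (weight0_www r s t)
  have "\<omega>^2 * w r * (\<omega>^2 * w s) * (\<omega>^2 * w t) = w r * w s * w t" using omega_cube by algebra
  then show ?case by simp
qed simp_all

lemma weight1_rotate: "weight1 N f \<Longrightarrow> f (\<lambda>i. \<omega> * u i) (\<lambda>i. \<omega>^2 * w i) = \<omega> * f u w"
proof (induction rule: weight1.induct)
  case (weight1_u r f)
  then show ?case by (simp add: weight0_rotate[OF weight1_u(2)] mult.assoc)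
next
  case (weight1_ww r s f)
  have "\<omega>^2 * w r * (\<omega>^2 * w s) * f u w = \<omega> * (w r * w s * f u w)" using omega_cube by algebra
  then show ?case by (simp add: weight0_rotate[OF weight1_ww(3)])
qed (simp_all add: distrib_left)

lemma weight2_rotate: "weight2 N f \<Longrightarrow> f (\<lambda>i. \<omega> * u i) (\<lambda>i. \<omega>^2 * w i) = \<omega>^2 * f u w"
proof (induction rule: weight2.induct)
  case (weight2_uu r s f)
  have "\<omega> * u r * (\<omega> * u s) * f u w = \<omega>^2 * (u r * u s * f u w)" by algebra
  then show ?case by (simp add: weight0_rotate[OF weight2_uu(3)])
next
  case (weight2_w r f)
  then show ?case by (simp add: weight0_rotate[OF weight2_w(2)] mult.assoc)
qed (simp_all add: distrib_left)

definition weight_decomposable :: "nat \<Rightarrow> pair_fun \<Rightarrow> bool" where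
  "weight_decomposable N F \<longleftrightarrow> (\<exists>f0 f1 f2. weight0 N f0 \<and> weight1 N f1 \<and> weight2 N f2
      \<and> (\<forall>u w. F u w = f0 u w + f1 u w + f2 u w))"

lemma weight_decomposable_add:
  assumes "weight_decomposable N F" and "weight_decomposable N G"
  shows "weight_decomposable N (\<lambda>u w. F u w + G u w)"
proof -
  obtain a0 a1 a2 b0 b1 b2 where
    a: "weight0 N a0" "weight1 N a1" "weight2 N a2" "\<forall>u w. F u w = a0 u w + a1 u w + a2 u w"
    and b: "weight0 N b0" "weight1 N b1" "weight2 N b2" "\<forall>u w. G u w = b0 u w + b1 u w + b2 u w"
    using assms unfolding weight_decomposable_def by blast
  have "weight0 N (\<lambda>u w. a0 u w + b0 u w)" "weight1 N (\<lambda>u w. a1 u w + b1 u w)"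
    "weight2 N (\<lambda>u w. a2 u w + b2 u w)"
    using a b by (auto intro: weight0_add weight1.weight1_add weight2.weight2_add)
  moreover have "\<forall>u w. F u w + G u w = (a0 u w + b0 u w) + (a1 u w + b1 u w) + (a2 u w + b2 u w)"
    using a(4) b(4) by (simp add: algebra_simps)
  ultimately show ?thesis unfolding weight_decomposable_def by blast
qed

lemma weight_decomposable_mult:
  assumes "weight_decomposable N F" and "weight_decomposable N G"
  shows "weight_decomposable N (\<lambda>u w. F u w * G u w)"
proof -
  obtain a0 a1 a2 b0 b1 b2 where
    a: "weight0 N a0" "weight1 N a1" "weight2 N a2" "\<forall>u w. F u w = a0 u w + a1 u w + a2 u w"
    and b: "weight0 N b0" "weight1 N b1" "weight2 N b2" "\<forall>u w. G u w = b0 u w + b1 u w + b2 u w"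
    using assms unfolding weight_decomposable_def by blast
  have "weight0 N (\<lambda>u w. a0 u w * b0 u w + a1 u w * b2 u w + b1 u w * a2 u w)"
    by (intro weight0_add weight0_mult a(1) b(1) weight1_times_weight2 a(2,3) b(2,3))
  moreover have "weight1 N (\<lambda>u w. a0 u w * b1 u w + b0 u w * a1 u w + a2 u w * b2 u w)"
    by (intro weight1.weight1_add weight0_times_weight1 weight2_times_weight2 a b)
  moreover have "weight2 N (\<lambda>u w. a0 u w * b2 u w + b0 u w * a2 u w + a1 u w * b1 u w)"
    by (intro weight2.weight2_add weight0_times_weight2 weight1_times_weight1 a b)
  moreover have "\<forall>u w. F u w * G u w
      = (a0 u w * b0 u w + a1 u w * b2 u w + b1 u w * a2 u w)
      + (a0 u w * b1 u w + b0 u w * a1 u w + a2 u w * b2 u w)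
      + (a0 u w * b2 u w + b0 u w * a2 u w + a1 u w * b1 u w)"
    using a(4) b(4) by (simp add: algebra_simps)
  ultimately show ?thesis unfolding weight_decomposable_def by blast
qed

lemma weight_decomposable_of_eig:
  fixes q :: "(nat \<times> bool \<times> nat \<Rightarrow> complex) \<Rightarrow> complex"
  assumes "poly_fun q"
  shows "weight_decomposable (2*n) (\<lambda>u w. q (of_eig n u w))"
  using assms
proof (induction rule: poly_fun.induct)
  case (pf_const c)
  have "\<forall>u w. c = c + 0 + 0" by simp
  then show ?case
    unfolding weight_decomposable_def using weight0_const weight1.weight1_zero weight2.weight2_zero by blast
next
  case (pf_var i)
  obtain k b d where i: "i = (k, b, d)" by (cases i)
  show ?case
  proof (cases "k < n \<and> d < 3")
    case True
    then have r: "vindex n k b < 2*n" by (simp add: vindex_less)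
    have "weight1 (2*n) (\<lambda>u w. u (vindex n k b) * \<omega>^d)"
      and "weight2 (2*n) (\<lambda>u w. w (vindex n k b) * \<omega>^(2*d))"
      by (intro weight1.weight1_u weight2.weight2_w r weight0_const)+
    moreover have "\<forall>u w. of_eig n u w i = 0 + u (vindex n k b) * \<omega>^d + w (vindex n k b) * \<omega>^(2*d)"
      using True by (simp add: of_eig_def i mult.commute)
    ultimately show ?thesis unfolding weight_decomposable_def using weight0_const by blast
  next
    case False
    then have "\<forall>u w. of_eig n u w i = 0 + 0 + 0" by (auto simp: of_eig_def i)
    then show ?thesis
      unfolding weight_decomposable_def using weight0_const weight1.weight1_zero weight2.weight2_zero by blast
  qed
qed (simp_all add: weight_decomposable_add weight_decomposable_mult)

lemma rotation_invariant_eq_weight0: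
  assumes f: "weight0 N f0" "weight1 N f1" "weight2 N f2"
    and Q: "\<And>u w. Q u w = f0 u w + f1 u w + f2 u w"
    and rot: "\<And>u w. Q (\<lambda>i. \<omega> * u i) (\<lambda>i. \<omega>^2 * w i) = Q u w"
  shows "Q u w = f0 u w"
proof -
  let ?u = "\<lambda>i. \<omega> * u i" and ?w = "\<lambda>i. \<omega>^2 * w i"
  have "Q u w = f0 u w + \<omega> * f1 u w + \<omega>^2 * f2 u w"
    using rot[of u w] Q[of ?u ?w] weight0_rotate[OF f(1)] weight1_rotate[OF f(2)] weight2_rotate[OF f(3)]
    by simp
  moreover have "Q u w = f0 u w + \<omega> * (\<omega> * f1 u w) + \<omega>^2 * (\<omega>^2 * f2 u w)"
    using rot[of ?u ?w] rot[of u w] Q[of "\<lambda>i. \<omega> * ?u i" "\<lambda>i. \<omega>^2 * ?w i"]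
      weight0_rotate[OF f(1), of ?u ?w] weight1_rotate[OF f(2), of ?u ?w] weight2_rotate[OF f(3), of ?u ?w]
      weight0_rotate[OF f(1)] weight1_rotate[OF f(2)] weight2_rotate[OF f(3)]
    by simp
  moreover have "Q u w = f0 u w + f1 u w + f2 u w" by (rule Q)
  ultimately show ?thesis using omega_sum omega_cube by algebra
qed

definition sym2 :: "nat \<Rightarrow> nat \<Rightarrow> pair_fun" where
  "sym2 r s u w = u r * w s + w r * u s"

definition sym3 :: "nat \<Rightarrow> nat \<Rightarrow> nat \<Rightarrow> pair_fun" where
  "sym3 r s t u w = u r * u s * u t + w r * w s * w t"

definition alt2 :: "nat \<Rightarrow> nat \<Rightarrow> pair_fun" where
  "alt2 r s u w = u r * w s - w r * u s"

definition alt3 :: "nat \<Rightarrow> nat \<Rightarrow> nat \<Rightarrow> pair_fun" where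
  "alt3 r s t u w = u r * u s * u t - w r * w s * w t"

lemma alt2_times_alt2:
  "alt2 r s u w * alt2 p q u w = sym2 r q u w * sym2 s p u w - sym2 r p u w * sym2 s q u w"
  by (simp add: alt2_def sym2_def algebra_simps)

lemma alt2_times_alt3:
  "alt2 r s u w * alt3 p q t u w = sym2 s p u w * sym3 r q t u w - sym2 r p u w * sym3 s q t u w"
  by (simp add: alt2_def sym2_def alt3_def sym3_def algebra_simps)

lemma alt3_times_alt3:
  "alt3 a1 a2 a3 u w * alt3 b1 b2 b3 u w = sym3 a1 a2 a3 u w * sym3 b1 b2 b3 u w
     - (1/2) * (sym2 a1 b1 u w * sym2 a2 b2 u w * sym2 a3 b3 u w
       + sym2 a1 b1 u w * (alt2 a2 b2 u w * alt2 a3 b3 u w)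
       + sym2 a2 b2 u w * (alt2 a1 b1 u w * alt2 a3 b3 u w)
       + sym2 a3 b3 u w * (alt2 a1 b1 u w * alt2 a2 b2 u w))"
  by (simp add: alt2_def sym2_def alt3_def sym3_def algebra_simps)

inductive swap_even :: "nat \<Rightarrow> pair_fun \<Rightarrow> bool" for N where
  swap_even_const: "swap_even N (\<lambda>u w. c)"
| swap_even_sym2: "r < N \<Longrightarrow> s < N \<Longrightarrow> swap_even N (\<lambda>u w. sym2 r s u w)"
| swap_even_sym3: "r < N \<Longrightarrow> s < N \<Longrightarrow> t < N \<Longrightarrow> swap_even N (\<lambda>u w. sym3 r s t u w)"
| swap_even_add: "swap_even N f \<Longrightarrow> swap_even N g \<Longrightarrow> swap_even N (\<lambda>u w. f u w + g u w)"
| swap_even_mult: "swap_even N f \<Longrightarrow> swap_even N g \<Longrightarrow> swap_even N (\<lambda>u w. f u w * g u w)"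

inductive swap_odd :: "nat \<Rightarrow> pair_fun \<Rightarrow> bool" for N where
  swap_odd_zero: "swap_odd N (\<lambda>u w. 0)"
| swap_odd_alt2: "r < N \<Longrightarrow> s < N \<Longrightarrow> swap_even N f \<Longrightarrow> swap_odd N (\<lambda>u w. alt2 r s u w * f u w)"
| swap_odd_alt3:
    "r < N \<Longrightarrow> s < N \<Longrightarrow> t < N \<Longrightarrow> swap_even N f \<Longrightarrow> swap_odd N (\<lambda>u w. alt3 r s t u w * f u w)"
| swap_odd_add: "swap_odd N f \<Longrightarrow> swap_odd N g \<Longrightarrow> swap_odd N (\<lambda>u w. f u w + g u w)"

lemma swap_even_diff: "swap_even N f \<Longrightarrow> swap_even N g \<Longrightarrow> swap_even N (\<lambda>u w. f u w - g u w)"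
  using swap_even_add[of N f "\<lambda>u w. (-1) * g u w"] swap_even_mult[OF swap_even_const[of N "-1"], of g]
  by simp

lemma swap_even_alt2_alt2:
  "r < N \<Longrightarrow> s < N \<Longrightarrow> p < N \<Longrightarrow> q < N \<Longrightarrow> swap_even N (\<lambda>u w. alt2 r s u w * alt2 p q u w)"
  unfolding alt2_times_alt2 by (intro swap_even_diff swap_even_mult swap_even_sym2)

lemma swap_even_alt2_alt3:
  "r < N \<Longrightarrow> s < N \<Longrightarrow> p < N \<Longrightarrow> q < N \<Longrightarrow> t < N
     \<Longrightarrow> swap_even N (\<lambda>u w. alt2 r s u w * alt3 p q t u w)"
  unfolding alt2_times_alt3 by (intro swap_even_diff swap_even_mult swap_even_sym2 swap_even_sym3)

lemma swap_even_alt3_alt3: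
  "a1 < N \<Longrightarrow> a2 < N \<Longrightarrow> a3 < N \<Longrightarrow> b1 < N \<Longrightarrow> b2 < N \<Longrightarrow> b3 < N
     \<Longrightarrow> swap_even N (\<lambda>u w. alt3 a1 a2 a3 u w * alt3 b1 b2 b3 u w)"
  unfolding alt3_times_alt3
  by (intro swap_even_diff swap_even_mult swap_even_add swap_even_const swap_even_sym2 swap_even_sym3
      swap_even_alt2_alt2)

lemma swap_odd_times_even: "swap_odd N g \<Longrightarrow> swap_even N f \<Longrightarrow> swap_odd N (\<lambda>u w. g u w * f u w)"
proof (induction g rule: swap_odd.induct)
  case (swap_odd_alt2 r s h)
  have "swap_odd N (\<lambda>u w. alt2 r s u w * (h u w * f u w))"
    by (intro swap_odd.swap_odd_alt2 swap_even_mult swap_odd_alt2)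
  then show ?case by (simp add: ac_simps)
next
  case (swap_odd_alt3 r s t h)
  have "swap_odd N (\<lambda>u w. alt3 r s t u w * (h u w * f u w))"
    by (intro swap_odd.swap_odd_alt3 swap_even_mult swap_odd_alt3)
  then show ?case by (simp add: ac_simps)
next
  case (swap_odd_add g1 g2)
  then show ?case by (simp add: distrib_right swap_odd.swap_odd_add)
qed (simp add: swap_odd.swap_odd_zero)

lemma swap_odd_times_odd: "swap_odd N f \<Longrightarrow> swap_odd N g \<Longrightarrow> swap_even N (\<lambda>u w. f u w * g u w)"
proof (induction f arbitrary: g rule: swap_odd.induct)
  case (swap_odd_alt2 r s h)
  note outer = swap_odd_alt2(1,2,3)
  from swap_odd_alt2(4) show ?case
  proof (induction g rule: swap_odd.induct)
    case (swap_odd_alt2 p q k)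
    have "swap_even N (\<lambda>u w. (alt2 r s u w * alt2 p q u w) * (h u w * k u w))"
      by (intro swap_even_mult swap_even_alt2_alt2 outer swap_odd_alt2)
    then show ?case by (simp add: ac_simps)
  next
    case (swap_odd_alt3 p q t k)
    have "swap_even N (\<lambda>u w. (alt2 r s u w * alt3 p q t u w) * (h u w * k u w))"
      by (intro swap_even_mult swap_even_alt2_alt3 outer swap_odd_alt3)
    then show ?case by (simp add: ac_simps)
  next
    case (swap_odd_add g1 g2)
    then show ?case by (simp add: distrib_left swap_even_add)
  qed (simp add: swap_even_const[of N 0])
next
  case (swap_odd_alt3 r s t h)
  note outer = swap_odd_alt3(1,2,3,4)
  from swap_odd_alt3(5) show ?case
  proof (induction g rule: swap_odd.induct)
    case (swap_odd_alt2 p q k)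
    have "swap_even N (\<lambda>u w. (alt2 p q u w * alt3 r s t u w) * (h u w * k u w))"
      by (intro swap_even_mult swap_even_alt2_alt3 outer swap_odd_alt2)
    then show ?case by (simp add: ac_simps)
  next
    case (swap_odd_alt3 p q t' k)
    have "swap_even N (\<lambda>u w. (alt3 r s t u w * alt3 p q t' u w) * (h u w * k u w))"
      by (intro swap_even_mult swap_even_alt3_alt3 outer swap_odd_alt3)
    then show ?case by (simp add: ac_simps)
  next
    case (swap_odd_add g1 g2)
    then show ?case by (simp add: distrib_left swap_even_add)
  qed (simp add: swap_even_const[of N 0])
next
  case (swap_odd_add f1 f2)
  then show ?case by (simp add: distrib_right swap_even_add)
qed (simp add: swap_even_const[of N 0])

lemma weight0_even_odd_split:
  "weight0 N f \<Longrightarrow> \<exists>e d. swap_even N e \<and> swap_odd N d \<and> (\<forall>u w. f u w = e u w + d u w)"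
proof (induction rule: weight0.induct)
  case (weight0_const c)
  show ?case using swap_even_const swap_odd_zero by fastforce
next
  case (weight0_uw r s)
  have "swap_even N (\<lambda>u w. (1/2) * sym2 r s u w)" "swap_odd N (\<lambda>u w. alt2 r s u w * (1/2))"
    by (intro swap_even_mult swap_even_const swap_even_sym2 swap_odd_alt2 weight0_uw)+
  moreover have "\<forall>u w. u r * w s = (1/2) * sym2 r s u w + alt2 r s u w * (1/2)"
    by (simp add: sym2_def alt2_def algebra_simps)
  ultimately show ?case by blast
next
  case (weight0_uuu r s t)
  have "swap_even N (\<lambda>u w. (1/2) * sym3 r s t u w)" "swap_odd N (\<lambda>u w. alt3 r s t u w * (1/2))"
    by (intro swap_even_mult swap_even_const swap_even_sym3 swap_odd_alt3 weight0_uuu)+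
  moreover have "\<forall>u w. u r * u s * u t = (1/2) * sym3 r s t u w + alt3 r s t u w * (1/2)"
    by (simp add: sym3_def alt3_def algebra_simps)
  ultimately show ?case by blast
next
  case (weight0_www r s t)
  have "swap_even N (\<lambda>u w. (1/2) * sym3 r s t u w)" "swap_odd N (\<lambda>u w. alt3 r s t u w * (-1/2))"
    by (intro swap_even_mult swap_even_const swap_even_sym3 swap_odd_alt3 weight0_www)+
  moreover have "\<forall>u w. w r * w s * w t = (1/2) * sym3 r s t u w + alt3 r s t u w * (-1/2)"
    by (simp add: sym3_def alt3_def algebra_simps)
  ultimately show ?case by blast
next
  case (weight0_add f g)
  then obtain e1 d1 e2 d2 where "swap_even N e1" "swap_odd N d1" "\<forall>u w. f u w = e1 u w + d1 u w"
    "swap_even N e2" "swap_odd N d2" "\<forall>u w. g u w = e2 u w + d2 u w" by blast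
  then show ?case
    by (intro exI[of _ "\<lambda>u w. e1 u w + e2 u w"] exI[of _ "\<lambda>u w. d1 u w + d2 u w"])
      (simp add: swap_even_add swap_odd_add)
next
  case (weight0_mult f g)
  then obtain e1 d1 e2 d2 where "swap_even N e1" "swap_odd N d1" "\<forall>u w. f u w = e1 u w + d1 u w"
    "swap_even N e2" "swap_odd N d2" "\<forall>u w. g u w = e2 u w + d2 u w" by blast
  then show ?case
    by (intro exI[of _ "\<lambda>u w. e1 u w * e2 u w + d1 u w * d2 u w"]
        exI[of _ "\<lambda>u w. d2 u w * e1 u w + d1 u w * e2 u w"])
      (simp add: swap_even_add swap_even_mult swap_odd_times_odd swap_odd_add swap_odd_times_even
        algebra_simps)
qed

lemma swap_even_swap: "swap_even N f \<Longrightarrow> f w u = f u w"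
  by (induction rule: swap_even.induct) (auto simp: sym2_def sym3_def algebra_simps)

lemma swap_odd_swap: "swap_odd N f \<Longrightarrow> f w u = - f u w"
  by (induction rule: swap_odd.induct) (auto simp: alt2_def alt3_def swap_even_swap algebra_simps)

lemma swap_even_quot_point:
  assumes "swap_even (2*n) f" and c: "c \<noteq> 0"
  shows "\<exists>p. poly_fun p \<and> (\<forall>u w. f u w = p (quot_point n c u w))"
  using assms(1)
proof (induction rule: swap_even.induct)
  case (swap_even_const a)
  then show ?case using pf_const by fastforce
next
  case (swap_even_sym2 r s)
  define s' where "s' = 2*n-1-s"
  have s': "s' < 2*n" "2*n-1-s' = s" using swap_even_sym2 by (auto simp: s'_def)
  have "sym2 r s u w = col_sign n s' * quot_point n c u w (Inl (r, s'))" for u w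
    using s' swap_even_sym2 by (simp add: quot_point_def pt_def sym2_def col_sign_def)
  moreover have "poly_fun (\<lambda>y. col_sign n s' * y (Inl (r, s')))" by (intro pf_mult pf_const pf_var)
  ultimately show ?case by blast
next
  case (swap_even_sym3 r s t)
  have "sym3 r s t u w = (1 / c) * quot_point n c u w (Inr (r, s, t))" for u w
    using swap_even_sym3 c by (simp add: quot_point_def pt_def sym3_def)
  moreover have "poly_fun (\<lambda>y. (1 / c) * y (Inr (r, s, t)))" by (intro pf_mult pf_const pf_var)
  ultimately show ?case by blast
next
  case (swap_even_add f g)
  then obtain p q where "poly_fun p" "\<forall>u w. f u w = p (quot_point n c u w)"
    "poly_fun q" "\<forall>u w. g u w = q (quot_point n c u w)" by blast
  then show ?case by (intro exI[of _ "\<lambda>y. p y + q y"]) (simp add: pf_add)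
next
  case (swap_even_mult f g)
  then obtain p q where "poly_fun p" "\<forall>u w. f u w = p (quot_point n c u w)"
    "poly_fun q" "\<forall>u w. g u w = q (quot_point n c u w)" by blast
  then show ?case by (intro exI[of _ "\<lambda>y. p y * q y"]) (simp add: pf_mult)
qed

definition rot3 :: "nat \<Rightarrow> nat" where
  "rot3 d = (if d < 3 then (d + 1) mod 3 else d)"

lemma rot3_permutes: "rot3 permutes {0, 1, 2}"
  by (rule bij_imp_permutes) (auto simp: bij_betw_def inj_on_def rot3_def)

lemma of_eig_rotate: "of_eig n (\<lambda>i. \<omega> * u i) (\<lambda>i. \<omega>^2 * w i) = S3_act (inv rot3) (of_eig n u w)"
proof -
  have rot: "\<omega>^d * (\<omega> * a) + \<omega>^(2*d) * (\<omega>^2 * b) = \<omega>^(rot3 d) * a + \<omega>^(2 * rot3 d) * b"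
    if "d < 3" for d a b
  proof -
    have "d = 0 \<or> d = 1 \<or> d = 2" using that by auto
    moreover have "\<omega> * (\<omega> * a) + \<omega>^2 * (\<omega>^2 * b) = \<omega>^2 * a + \<omega>^4 * b"
      by algebra
    moreover have "\<omega>^2 * (\<omega> * a) + \<omega>^4 * (\<omega>^2 * b) = a + b"
      using omega_cube by algebra
    ultimately show ?thesis by (auto simp: rot3_def)
  qed
  have inv_inv: "inv (inv rot3) = rot3" by (rule permutes_inv_inv[OF rot3_permutes])
  show ?thesis
  proof (rule ext, clarify)
    fix k b d
    show "of_eig n (\<lambda>i. \<omega> * u i) (\<lambda>i. \<omega>^2 * w i) (k, b, d) = S3_act (inv rot3) (of_eig n u w) (k, b, d)"
      using rot[of d "u (vindex n k b)" "w (vindex n k b)"]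
      by (cases "d < 3") (auto simp: of_eig_def S3_act_def inv_inv rot3_def)
  qed
qed

lemma of_eig_swap: "of_eig n w u = S3_act (transpose 1 2) (of_eig n u w)"
proof -
  have swap: "\<omega>^d * b + \<omega>^(2*d) * a = \<omega>^(transpose 1 2 d) * a + \<omega>^(2 * transpose 1 2 d) * b"
    if "d < 3" for d a b
  proof -
    have "d = 0 \<or> d = 1 \<or> d = 2" using that by auto
    moreover have "\<omega> * b + \<omega>^2 * a = \<omega>^2 * a + \<omega>^4 * b"
      using omega_cube by algebra
    moreover have "\<omega>^2 * b + \<omega>^4 * a = \<omega> * a + \<omega>^2 * b"
      using omega_cube by algebra
    moreover have "b + a = a + b" by (rule add.commute)
    ultimately show ?thesis by (auto simp: transpose_def)
  qed
  show ?thesis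
  proof (rule ext, clarify)
    fix k b d
    show "of_eig n w u (k, b, d) = S3_act (transpose 1 2) (of_eig n u w) (k, b, d)"
      using swap[of d "w (vindex n k b)" "u (vindex n k b)"]
      by (cases "d < 3") (auto simp: of_eig_def S3_act_def transpose_def)
  qed
qed

lemma rotation_swap_in_S3: "inv rot3 \<in> S3" "transpose 1 2 \<in> S3"
  unfolding S3_def mem_Collect_eq by (rule permutes_inv[OF rot3_permutes], rule permutes_swap_id, simp_all)

text \<open>Rotation invariance kills the components of weight \<open>1\<close> and \<open>2\<close>, swap invariance the
  anti-invariant part of the weight-\<open>0\<close> component.\<close>

lemma invariant_of_eig_swap_even:
  assumes q: "poly_fun q"
    and rot: "\<And>u w. q (of_eig n (\<lambda>i. \<omega> * u i) (\<lambda>i. \<omega>^2 * w i)) = q (of_eig n u w)"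
    and swap: "\<And>u w. q (of_eig n w u) = q (of_eig n u w)"
  shows "\<exists>e. swap_even (2*n) e \<and> (\<forall>u w. q (of_eig n u w) = e u w)"
proof -
  obtain f0 f1 f2 where f: "weight0 (2*n) f0" "weight1 (2*n) f1" "weight2 (2*n) f2"
    and q_eq: "\<forall>u w. q (of_eig n u w) = f0 u w + f1 u w + f2 u w"
    using weight_decomposable_of_eig[OF q] unfolding weight_decomposable_def by blast
  have q_f0: "q (of_eig n u w) = f0 u w" for u w
    by (rule rotation_invariant_eq_weight0[OF f, of "\<lambda>u w. q (of_eig n u w)"]) (use q_eq rot in simp_all)
  obtain e d where e: "swap_even (2*n) e" and d: "swap_odd (2*n) d" and f0: "\<forall>u w. f0 u w = e u w + d u w"
    using weight0_even_odd_split[OF f(1)] by blast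
  have "d u w = 0" for u w
  proof -
    have "e u w + d u w = q (of_eig n u w)" using f0 q_f0 by simp
    also have "\<dots> = q (of_eig n w u)" by (rule swap[symmetric])
    also have "\<dots> = e w u + d w u" using f0 q_f0 by simp
    also have "\<dots> = e u w - d u w" using swap_even_swap[OF e, where u = u and w = w] swap_odd_swap[OF d, where u = u and w = w]
      by simp
    finally show ?thesis by algebra
  qed
  then show ?thesis using e f0 q_f0 by (intro exI[of _ e]) simp
qed

lemma pullback_surjective:
  assumes c: "c \<noteq> 0" and q: "poly_fun q"
    and invariant: "\<forall>\<sigma>\<in>S3. \<forall>x\<in>refl_space n. q (S3_act \<sigma> x) = q x"
  shows "\<exists>p. poly_fun p \<and> (\<forall>x\<in>refl_space n. q x = p (quot_map n c x))"
proof -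
  have "q (of_eig n (\<lambda>i. \<omega> * u i) (\<lambda>i. \<omega>^2 * w i)) = q (of_eig n u w)" for u w
    unfolding of_eig_rotate using invariant rotation_swap_in_S3(1) of_eig_refl_space by blast
  moreover have "q (of_eig n w u) = q (of_eig n u w)" for u w
    unfolding of_eig_swap[of n w u] using invariant rotation_swap_in_S3(2) of_eig_refl_space by blast
  ultimately obtain e where e: "swap_even (2*n) e" "\<forall>u w. q (of_eig n u w) = e u w"
    using invariant_of_eig_swap_even[OF q] by blast
  obtain p where p: "poly_fun p" "\<forall>u w. e u w = p (quot_point n c u w)"
    using swap_even_quot_point[OF e(1) c] by blast
  have "q x = p (quot_map n c x)" if x: "x \<in> refl_space n" for x
  proof -
    have "q x = q (of_eig n (eig_u n x) (eig_w n x))" using of_eig_eig[OF x] by simp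
    also have "\<dots> = p (quot_point n c (eig_u n x) (eig_w n x))" using e(2) p(2) by simp
    also have "\<dots> = p (quot_map n c x)" using quot_map_eq_quot_point[OF x] by simp
    finally show ?thesis .
  qed
  then show ?thesis using p(1) by blast
qed

lemma exists_cube_scaling:
  fixes A B :: complex
  assumes "A \<noteq> 0" and "B \<noteq> 0"
  shows "\<exists>\<alpha> \<beta> c. \<alpha> * \<beta> = 1 \<and> c * \<alpha>^3 = A \<and> c * \<beta>^3 = B \<and> c \<noteq> 0"
proof -
  obtain a where a: "a^6 = A / B"
    using bij_betw_apply[OF bij_betw_nth_root_unity[of "A / B" 6], of 1] assms by auto
  then have "a \<noteq> 0" using assms by auto
  then have "a * (1 / a) = 1" "(A / a^3) * a^3 = A" "(A / a^3) * (1 / a)^3 = B" "A / a^3 \<noteq> 0"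
    using a assms by (simp_all add: field_simps flip: power_add)
  then show ?thesis by blast
qed

lemma quotient_iso_sp_orbit:
  assumes n: "1 \<le> n" and "A \<noteq> 0" "B \<noteq> 0"
  shows "quotient_iso (refl_space n) S3_act S3 (zariski_closure (sp_orbit n (M0 n) (T0 n A B)))"
proof -
  obtain \<alpha> \<beta> c where ab: "\<alpha> * \<beta> = 1" "c * \<alpha>^3 = A" "c * \<beta>^3 = B" and c: "c \<noteq> 0"
    using exists_cube_scaling[OF assms(2,3)] by blast
  let ?Y = "zariski_closure (sp_orbit n (M0 n) (T0 n A B))"
  show ?thesis
    unfolding quotient_iso_def
  proof (intro exI[of _ "quot_map n c"] conjI)
    show "\<forall>j. poly_fun (\<lambda>x. quot_map n c x j)" using poly_fun_quot_map by blast
    show "quot_map n c ` refl_space n \<subseteq> ?Y" by (rule quot_map_image[OF n ab])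
    show "\<forall>\<sigma>\<in>S3. \<forall>x\<in>refl_space n. quot_map n c (S3_act \<sigma> x) = quot_map n c x"
      using quot_map_S3_invariant by blast
    show "\<forall>p. poly_fun p \<and> (\<forall>x\<in>refl_space n. p (quot_map n c x) = 0) \<longrightarrow> (\<forall>y\<in>?Y. p y = 0)"
      using pullback_injective[OF n ab] by blast
    show "\<forall>q. poly_fun q \<and> (\<forall>\<sigma>\<in>S3. \<forall>x\<in>refl_space n. q (S3_act \<sigma> x) = q x)
        \<longrightarrow> (\<exists>p. poly_fun p \<and> (\<forall>x\<in>refl_space n. q x = p (quot_map n c x)))"
      using pullback_surjective[OF c] by blast
  qed
qed

theorem lemma3p8:
  fixes n :: nat
  assumes "1 \<le> n"
  shows "quotient_iso (refl_space n) S3_act S3 (zariski_closure (sp_orbit n (M0 n) (T0 n 1 1)))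
       \<and> (\<forall>a b. a \<noteq> 0 \<and> b \<noteq> 0 \<longrightarrow>
            quotient_iso (refl_space n) S3_act S3 (zariski_closure (sp_orbit n (M0 n) (T0 n a b))))"
  using quotient_iso_sp_orbit[OF assms] by simp

end
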